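(* Let $T=(T_1,T_2)$ be a cyclic analytic toral isometry on a complex Hilbert space $\mathcal H$ with a cyclic vector $f_0\in\ker T^*=\ker T_1^*\cap\ker T_2^*$. The following are equivalent: (i) $\ker T^*$ is a wandering subspace for $T$; (ii) $T$ is unitarily equivalent to the pair $\mathscr M_z=(\mathscr M_{z_1},\mathscr M_{z_2})$ of multiplications by the coordinate functions on the Hardy space $H^2(\mathbb D^2)$; (iii) $T$ is doubly commuting, i.e. $T_j^*T_i=T_iT_j^*$ for $1\le i\ne j\le 2$.
   Context: A toral isometry is a commuting pair $T=(T_1,T_2)$ with $T_1,T_2$ isometries. $T$ is cyclic with cyclic vector $f_0$ if the closed linear span of $\{T_1^{a}T_2^{b}f_0:a,b\ge0\}$ is $\mathcal H$. $T$ is analytic if $\bigcap_{k\ge0}\sum_{a+b=k}T_1^aT_2^b\mathcal H=\{0\}$. A closed subspace $\mathcal W$ is wandering for $T$ if $T_1^{\alpha_1}T_2^{\alpha_2}\mathcal W\perp T_1^{\beta_1}T_2^{\beta_2}\mathcal W$ whenever $\alpha,\beta\in\mathbb Z_+^2$ and there is $i\in\{1,2\}$ with $\alpha_i=0$ and $\beta_i\ne0$. $H^2(\mathbb D^2)$ is the space of holomorphic $f=\sum_{m,n\ge0}a_{m,n}z_1^mz_2^n$ on the unit bidisc with $\|f\|^2=\sum|a_{m,n}|^2<\infty$. *)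

theory Defs
  imports "HOL-Analysis.Analysis"
begin

text \<open>A complex Hilbert space is represented by a carrier type 'a (an additive
abelian group) together with an explicit complex scalar multiplication sc and an
inner product ip, linear in the first and conjugate-linear in the second argument.\<close>

definition hnorm :: "('a \<Rightarrow> 'a \<Rightarrow> complex) \<Rightarrow> 'a \<Rightarrow> real" where
  "hnorm ip x = sqrt (Re (ip x x))"

definition complex_hilbert ::
  "(complex \<Rightarrow> 'a::ab_group_add \<Rightarrow> 'a) \<Rightarrow> ('a \<Rightarrow> 'a \<Rightarrow> complex) \<Rightarrow> bool" where
  "complex_hilbert sc ip \<longleftrightarrow>
     (\<forall>x. sc 1 x = x) \<and>
     (\<forall>a b x. sc a (sc b x) = sc (a * b) x) \<and>
     (\<forall>a x y. sc a (x + y) = sc a x + sc a y) \<and>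
     (\<forall>a b x. sc (a + b) x = sc a x + sc b x) \<and>
     (\<forall>x y z. ip (x + y) z = ip x z + ip y z) \<and>
     (\<forall>a x y. ip (sc a x) y = a * ip x y) \<and>
     (\<forall>x y. ip y x = cnj (ip x y)) \<and>
     (\<forall>x. Im (ip x x) = 0 \<and> 0 \<le> Re (ip x x)) \<and>
     (\<forall>x. ip x x = 0 \<longrightarrow> x = 0) \<and>
     (\<forall>X :: nat \<Rightarrow> 'a. (\<forall>e>0. \<exists>N. \<forall>m\<ge>N. \<forall>n\<ge>N. hnorm ip (X m - X n) < e)
         \<longrightarrow> (\<exists>L. \<forall>e>0. \<exists>N. \<forall>n\<ge>N. hnorm ip (X n - L) < e))"

definition clinear_map :: "(complex \<Rightarrow> 'a::ab_group_add \<Rightarrow> 'a) \<Rightarrow> ('a \<Rightarrow> 'a) \<Rightarrow> bool" where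
  "clinear_map sc T \<longleftrightarrow> (\<forall>x y. T (x + y) = T x + T y) \<and> (\<forall>c x. T (sc c x) = sc c (T x))"

definition hisometry ::
  "(complex \<Rightarrow> 'a::ab_group_add \<Rightarrow> 'a) \<Rightarrow> ('a \<Rightarrow> 'a \<Rightarrow> complex) \<Rightarrow> ('a \<Rightarrow> 'a) \<Rightarrow> bool" where
  "hisometry sc ip T \<longleftrightarrow> clinear_map sc T \<and> (\<forall>x. hnorm ip (T x) = hnorm ip x)"

definition toral_isometry ::
  "(complex \<Rightarrow> 'a::ab_group_add \<Rightarrow> 'a) \<Rightarrow> ('a \<Rightarrow> 'a \<Rightarrow> complex) \<Rightarrow> ('a \<Rightarrow> 'a) \<Rightarrow> ('a \<Rightarrow> 'a) \<Rightarrow> bool" where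
  "toral_isometry sc ip T1 T2 \<longleftrightarrow> hisometry sc ip T1 \<and> hisometry sc ip T2 \<and> T1 \<circ> T2 = T2 \<circ> T1"

text \<open>Hilbert-space adjoint (exists and is unique for bounded operators).\<close>
definition hadj :: "('a \<Rightarrow> 'a \<Rightarrow> complex) \<Rightarrow> ('a \<Rightarrow> 'a) \<Rightarrow> ('a \<Rightarrow> 'a)" where
  "hadj ip T = (THE S. \<forall>x y. ip (T x) y = ip x (S y))"

definition kerTstar :: "('a::zero \<Rightarrow> 'a \<Rightarrow> complex) \<Rightarrow> ('a \<Rightarrow> 'a) \<Rightarrow> ('a \<Rightarrow> 'a) \<Rightarrow> 'a set" where
  "kerTstar ip T1 T2 = {x. hadj ip T1 x = 0 \<and> hadj ip T2 x = 0}"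

definition hspan :: "(complex \<Rightarrow> 'a::ab_group_add \<Rightarrow> 'a) \<Rightarrow> 'a set \<Rightarrow> 'a set" where
  "hspan sc A = {sum (\<lambda>v. sc (c v) v) F | F c. finite F \<and> F \<subseteq> A}"

definition hclosure :: "('a::ab_group_add \<Rightarrow> 'a \<Rightarrow> complex) \<Rightarrow> 'a set \<Rightarrow> 'a set" where
  "hclosure ip A = {x. \<forall>e>0. \<exists>a\<in>A. hnorm ip (x - a) < e}"

definition closed_hsubspace ::
  "(complex \<Rightarrow> 'a::ab_group_add \<Rightarrow> 'a) \<Rightarrow> ('a \<Rightarrow> 'a \<Rightarrow> complex) \<Rightarrow> 'a set \<Rightarrow> bool" where
  "closed_hsubspace sc ip W \<longleftrightarrow> 0 \<in> W \<and> (\<forall>x\<in>W. \<forall>y\<in>W. x + y \<in> W) \<and>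
     (\<forall>c. \<forall>x\<in>W. sc c x \<in> W) \<and> hclosure ip W \<subseteq> W"

definition cyclic_vector ::
  "(complex \<Rightarrow> 'a::ab_group_add \<Rightarrow> 'a) \<Rightarrow> ('a \<Rightarrow> 'a \<Rightarrow> complex) \<Rightarrow> ('a \<Rightarrow> 'a) \<Rightarrow> ('a \<Rightarrow> 'a) \<Rightarrow> 'a \<Rightarrow> bool" where
  "cyclic_vector sc ip T1 T2 f0 \<longleftrightarrow>
     hclosure ip (hspan sc {(T1 ^^ a) ((T2 ^^ b) f0) | a b. True}) = UNIV"

text \<open>Analytic: \<Inter>_k \<Sum>_{a+b=k} T1^a T2^b H = {0} (algebraic sums of ranges).\<close>
definition analytic_pair :: "('a::ab_group_add \<Rightarrow> 'a) \<Rightarrow> ('a \<Rightarrow> 'a) \<Rightarrow> bool" where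
  "analytic_pair T1 T2 \<longleftrightarrow>
     (\<Inter>k. {(\<Sum>a\<in>{..k}. (T1 ^^ a) ((T2 ^^ (k - a)) (h a))) | h. True}) = {0}"

definition wandering ::
  "(complex \<Rightarrow> 'a::ab_group_add \<Rightarrow> 'a) \<Rightarrow> ('a \<Rightarrow> 'a \<Rightarrow> complex) \<Rightarrow> ('a \<Rightarrow> 'a) \<Rightarrow> ('a \<Rightarrow> 'a) \<Rightarrow> 'a set \<Rightarrow> bool" where
  "wandering sc ip T1 T2 W \<longleftrightarrow> closed_hsubspace sc ip W \<and>
     (\<forall>a1 a2 b1 b2 :: nat. ((a1 = 0 \<and> b1 \<noteq> 0) \<or> (a2 = 0 \<and> b2 \<noteq> 0)) \<longrightarrow>
        (\<forall>w\<in>W. \<forall>v\<in>W. ip ((T1 ^^ a1) ((T2 ^^ a2) w)) ((T1 ^^ b1) ((T2 ^^ b2) v)) = 0))"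

definition doubly_commuting :: "('a \<Rightarrow> 'a \<Rightarrow> complex) \<Rightarrow> ('a \<Rightarrow> 'a) \<Rightarrow> ('a \<Rightarrow> 'a) \<Rightarrow> bool" where
  "doubly_commuting ip T1 T2 \<longleftrightarrow>
     hadj ip T2 \<circ> T1 = T1 \<circ> hadj ip T2 \<and> hadj ip T1 \<circ> T2 = T2 \<circ> hadj ip T1"

definition bidisc :: "(complex \<times> complex) set" where
  "bidisc = {z. cmod (fst z) < 1 \<and> cmod (snd z) < 1}"

definition h2_series :: "(nat \<times> nat \<Rightarrow> complex) \<Rightarrow> (complex \<times> complex \<Rightarrow> complex) \<Rightarrow> bool" where
  "h2_series a f \<longleftrightarrow>
     (\<lambda>p. (cmod (a p))\<^sup>2) summable_on UNIV \<and>
     (\<forall>z\<in>bidisc. ((\<lambda>(m, n). a (m, n) * fst z ^ m * snd z ^ n) has_sum f z) UNIV) \<and>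
     (\<forall>z. z \<notin> bidisc \<longrightarrow> f z = 0)"

definition H2 :: "(complex \<times> complex \<Rightarrow> complex) set" where
  "H2 = {f. \<exists>a. h2_series a f}"

definition h2_coeff :: "(complex \<times> complex \<Rightarrow> complex) \<Rightarrow> nat \<times> nat \<Rightarrow> complex" where
  "h2_coeff f = (THE a. h2_series a f)"

definition h2_inner :: "(complex \<times> complex \<Rightarrow> complex) \<Rightarrow> (complex \<times> complex \<Rightarrow> complex) \<Rightarrow> complex" where
  "h2_inner f g = (\<Sum>\<^sub>\<infinity>p. h2_coeff f p * cnj (h2_coeff g p))"

definition Mz1 :: "(complex \<times> complex \<Rightarrow> complex) \<Rightarrow> (complex \<times> complex \<Rightarrow> complex)" where
  "Mz1 f = (\<lambda>z. if z \<in> bidisc then fst z * f z else 0)"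

definition Mz2 :: "(complex \<times> complex \<Rightarrow> complex) \<Rightarrow> (complex \<times> complex \<Rightarrow> complex)" where
  "Mz2 f = (\<lambda>z. if z \<in> bidisc then snd z * f z else 0)"

definition unitarily_equiv_Mz ::
  "(complex \<Rightarrow> 'a::ab_group_add \<Rightarrow> 'a) \<Rightarrow> ('a \<Rightarrow> 'a \<Rightarrow> complex) \<Rightarrow> ('a \<Rightarrow> 'a) \<Rightarrow> ('a \<Rightarrow> 'a) \<Rightarrow> bool" where
  "unitarily_equiv_Mz sc ip T1 T2 \<longleftrightarrow>
     (\<exists>U :: 'a \<Rightarrow> (complex \<times> complex \<Rightarrow> complex).
        bij_betw U UNIV H2 \<and>
        (\<forall>x y. U (x + y) = (\<lambda>z. U x z + U y z)) \<and>
        (\<forall>c x. U (sc c x) = (\<lambda>z. c * U x z)) \<and>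
        (\<forall>x y. h2_inner (U x) (U y) = ip x y) \<and>
        (\<forall>x. U (T1 x) = Mz1 (U x)) \<and>
        (\<forall>x. U (T2 x) = Mz2 (U x)))"

end

theory Submission
  imports Defs
begin

(* Everything runs through orbit bases: vectors g whose orbit T1^m T2^n g, for (m, n) in
   N x N, is an orthonormal basis. Given such a g, sending x to the function with
   coefficients <x, T1^m T2^n g> is a unitary onto H^2(D^2); it turns T1 and T2, which
   shift these coefficients, into multiplication by z1 and z2, and on the basis the adjoint
   of T2 visibly commutes with T1 (and vice versa), which extends by density.
   Conversely, each condition produces an orbit basis whose orbit spans the same space as
   that of f0: if ker T* is wandering, the orbit of f0 / |f0| is orthonormal; under a unitary
   equivalence, the preimage g of the constant 1 has an orthonormal orbit, and f0, being
   orthogonal to the ranges of T1 and T2, is a multiple of g. Double commutativity makes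
   ker T* wandering, as T1* commutes with powers of T2 and annihilates ker T*. *)

lemma mult_cnj_eq_cmod_sq: "z * cnj z = (complex_of_real (cmod z))\<^sup>2"
  by (simp add: complex_norm_square[symmetric])

lemma cmod_add_sq: "(cmod (u + v))\<^sup>2 = (cmod u)\<^sup>2 + (cmod v)\<^sup>2 + 2 * Re (u * cnj v)"
  unfolding cmod_power2 by (simp add: power2_eq_square algebra_simps)

lemma summable_on_mult_cnj:
  fixes a b :: "'i \<Rightarrow> complex"
  assumes "(\<lambda>p. (cmod (a p))\<^sup>2) summable_on A" and "(\<lambda>p. (cmod (b p))\<^sup>2) summable_on A"
  shows "(\<lambda>p. a p * cnj (b p)) summable_on A"
proof -
  have bound: "norm (a p * cnj (b p)) \<le> (cmod (a p))\<^sup>2 + (cmod (b p))\<^sup>2" for p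
  proof -
    have "norm (a p * cnj (b p)) = cmod (a p) * cmod (b p)"
      by (simp add: norm_mult)
    moreover have "0 \<le> cmod (a p) * cmod (b p)"
      by simp
    ultimately show ?thesis
      using sum_squares_bound[of "cmod (a p)" "cmod (b p)"] by linarith
  qed
  have "(\<lambda>p. norm (a p * cnj (b p))) summable_on A"
    by (rule Infinite_Sum.abs_summable_on_comparison_test'[OF summable_on_add[OF assms]])
      (use bound in simp)
  then show ?thesis
    by (rule Infinite_Sum.abs_summable_summable)
qed

lemma filterlim_squares_finite_subsets:
  "filterlim (\<lambda>N. {..<N} \<times> {..<N}) (finite_subsets_at_top UNIV) sequentially"
  unfolding filterlim_finite_subsets_at_top
proof (intro allI impI)
  fix X :: "(nat \<times> nat) set"
  assume "finite X \<and> X \<subseteq> UNIV"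
  then obtain K where K: "\<forall>k\<in>fst ` X \<union> snd ` X. k < K"
    by (meson finite_Un finite_imageI finite_nat_set_iff_bounded)
  have "X \<subseteq> {..<N} \<times> {..<N}" if "N \<ge> K" for N
  proof
    fix p
    assume "p \<in> X"
    then have "fst p < K" "snd p < K"
      using K by auto
    then show "p \<in> {..<N} \<times> {..<N}"
      using that by (cases p) auto
  qed
  then show "\<forall>\<^sub>F N in sequentially. finite ({..<N} \<times> {..<N}) \<and> X \<subseteq> {..<N} \<times> {..<N}
      \<and> {..<N} \<times> {..<N} \<subseteq> UNIV"
    by (auto intro: eventually_sequentiallyI[of K])
qed

lemma funpow_commute:
  assumes "\<And>x. f (g x) = g (f x)"
  shows "(f ^^ m) ((g ^^ n) x) = (g ^^ n) ((f ^^ m) x)"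
proof -
  have "f ((g ^^ n) y) = (g ^^ n) (f y)" for y
    by (induction n arbitrary: y) (simp_all add: assms)
  then show ?thesis
    by (induction m arbitrary: x) simp_all
qed

section \<open>Complex Hilbert spaces\<close>

locale hilbert_space =
  fixes sc :: "complex \<Rightarrow> 'a::ab_group_add \<Rightarrow> 'a" and ip :: "'a \<Rightarrow> 'a \<Rightarrow> complex"
  assumes hilbert: "complex_hilbert sc ip"
begin

abbreviation hn :: "'a \<Rightarrow> real" where "hn \<equiv> hnorm ip"

lemma
  shows sc_one [simp]: "sc 1 x = x"
    and sc_sc: "sc a (sc b x) = sc (a * b) x"
    and sc_add_right: "sc a (x + y) = sc a x + sc a y"
    and sc_add_left: "sc (a + b) x = sc a x + sc b x"
    and ip_add_left: "ip (x + y) z = ip x z + ip y z"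
    and ip_sc_left: "ip (sc a x) y = a * ip x y"
    and ip_commute: "ip y x = cnj (ip x y)"
    and ip_self_nonneg: "0 \<le> Re (ip x x)"
    and ip_self_Im: "Im (ip x x) = 0"
    and ip_self_eq_zero: "ip x x = 0 \<Longrightarrow> x = 0"
  using hilbert unfolding complex_hilbert_def by - (elim conjE, blast)+

lemma sc_zero_left [simp]: "sc 0 x = 0"
  using sc_add_left[of 0 0 x] by simp

lemma sc_zero_right [simp]: "sc a 0 = 0"
  using sc_add_right[of a 0 0] by simp

lemma sc_minus_right: "sc a (- x) = - sc a x"
  using add.inverse_unique[of "sc a x" "sc a (- x)"] sc_add_right[of a x "- x"] by simp

lemma sc_diff_right: "sc a (x - y) = sc a x - sc a y"
  using sc_add_right[of a x "- y"] by (simp add: sc_minus_right)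

lemma sc_minus_left: "sc (- a) x = - sc a x"
  using add.inverse_unique[of "sc a x" "sc (- a) x"] sc_add_left[of a "- a" x] by simp

lemma sc_diff_left: "sc (a - b) x = sc a x - sc b x"
  using sc_add_left[of a "- b" x] by (simp add: sc_minus_left)

lemma sc_sum_right: "sc a (sum f F) = (\<Sum>v\<in>F. sc a (f v))"
  by (induction F rule: infinite_finite_induct) (auto simp: sc_add_right)

lemma ip_add_right: "ip x (y + z) = ip x y + ip x z"
  by (metis ip_commute ip_add_left complex_cnj_add)

lemma ip_sc_right: "ip x (sc a y) = cnj a * ip x y"
  by (metis ip_commute ip_sc_left complex_cnj_mult)

lemma ip_zero_left [simp]: "ip 0 y = 0"
  using ip_add_left[of 0 0 y] by simp

lemma ip_zero_right [simp]: "ip x 0 = 0"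
  using ip_add_right[of x 0 0] by simp

lemma ip_minus_left: "ip (- x) y = - ip x y"
  using add.inverse_unique[of "ip x y" "ip (- x) y"] ip_add_left[of x "- x" y] by simp

lemma ip_minus_right: "ip x (- y) = - ip x y"
  using add.inverse_unique[of "ip x y" "ip x (- y)"] ip_add_right[of x y "- y"] by simp

lemma ip_diff_left: "ip (x - y) z = ip x z - ip y z"
  using ip_add_left[of x "- y" z] by (simp add: ip_minus_left)

lemma ip_diff_right: "ip x (y - z) = ip x y - ip x z"
  using ip_add_right[of x y "- z"] by (simp add: ip_minus_right)

lemma ip_sum_left: "ip (sum f F) z = (\<Sum>v\<in>F. ip (f v) z)"
  by (induction F rule: infinite_finite_induct) (auto simp: ip_add_left)

lemma ip_sum_right: "ip z (sum f F) = (\<Sum>v\<in>F. ip z (f v))"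
  by (induction F rule: infinite_finite_induct) (auto simp: ip_add_right)

lemma ip_eq_right: "(\<And>x. ip x a = ip x b) \<Longrightarrow> a = b"
  using ip_self_eq_zero[of "a - b"] by (simp add: ip_diff_right)

lemma hn_nonneg [simp]: "0 \<le> hn x"
  by (simp add: hnorm_def ip_self_nonneg)

lemma hn_sq: "(hn x)\<^sup>2 = Re (ip x x)"
  by (simp add: hnorm_def ip_self_nonneg)

lemma ip_self: "ip x x = of_real ((hn x)\<^sup>2)"
  using ip_self_Im[of x] by (simp add: hn_sq complex_eq_iff)

lemma hn_eq_zero_iff [simp]: "hn x = 0 \<longleftrightarrow> x = 0"
  using ip_self[of x] ip_self_eq_zero[of x] by (auto simp: hnorm_def)

lemma hn_zero [simp]: "hn 0 = 0"
  by simp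

lemma hn_le_zero_iff [simp]: "hn x \<le> 0 \<longleftrightarrow> x = 0"
  using hn_nonneg[of x] hn_eq_zero_iff[of x] by linarith

lemma hn_pos: "x \<noteq> 0 \<Longrightarrow> 0 < hn x"
  using hn_nonneg[of x] hn_eq_zero_iff[of x] by linarith

lemma hn_sc: "hn (sc a x) = cmod a * hn x"
proof -
  have "ip (sc a x) (sc a x) = of_real ((cmod a)\<^sup>2) * ip x x"
    by (simp add: ip_sc_left ip_sc_right mult_cnj_eq_cmod_sq mult.commute)
  then have "(hn (sc a x))\<^sup>2 = (cmod a * hn x)\<^sup>2"
    by (simp add: hn_sq power_mult_distrib)
  then show ?thesis by (simp add: power2_eq_iff_nonneg)
qed

lemma hn_minus: "hn (- x) = hn x"
  using hn_sc[of "- 1" x] by (simp add: sc_minus_left)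

lemma hn_diff_commute: "hn (x - y) = hn (y - x)"
  by (metis hn_minus minus_diff_eq)

lemma hn_add_sq: "(hn (x + y))\<^sup>2 = (hn x)\<^sup>2 + (hn y)\<^sup>2 + 2 * Re (ip x y)"
proof -
  have "ip (x + y) (x + y) = ip x x + ip y y + (ip x y + cnj (ip x y))"
    by (simp add: ip_add_left ip_add_right ip_commute[of x y])
  then show ?thesis by (simp add: hn_sq complex_add_cnj)
qed

lemma hn_diff_sq: "(hn (x - y))\<^sup>2 = (hn x)\<^sup>2 + (hn y)\<^sup>2 - 2 * Re (ip x y)"
  using hn_add_sq[of x "- y"] hn_minus[of y] ip_minus_right[of x y] by simp

lemma parallelogram_law: "(hn (x - y))\<^sup>2 + (hn (x + y))\<^sup>2 = 2 * (hn x)\<^sup>2 + 2 * (hn y)\<^sup>2"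
  by (simp add: hn_add_sq hn_diff_sq)

text \<open>Removing from x its component along y: the identity behind both Cauchy--Schwarz and the
  orthogonality of best approximations.\<close>

lemma hn_diff_component_sq:
  assumes "y \<noteq> 0"
  shows "(hn (x - sc (ip x y / ip y y) y))\<^sup>2 = (hn x)\<^sup>2 - (cmod (ip x y))\<^sup>2 / (hn y)\<^sup>2"
proof -
  define t where "t = ip x y / ip y y"
  define c where "c = (cmod (ip x y))\<^sup>2 / (hn y)\<^sup>2"
  have hy: "hn y \<noteq> 0" using assms by simp
  have Re_ip: "Re (ip x (sc t y)) = c"
    using hy by (simp add: t_def c_def ip_sc_right ip_self mult_cnj_eq_cmod_sq field_simps)
  have cmod_t: "cmod t = cmod (ip x y) / (hn y)\<^sup>2"
    by (simp add: t_def ip_self norm_divide norm_power)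
  have "(hn (sc t y))\<^sup>2 = (cmod t * hn y)\<^sup>2"
    by (simp add: hn_sc)
  also have "\<dots> = c"
    unfolding cmod_t c_def using hy by (simp add: field_simps power2_eq_square)
  finally show ?thesis
    using Re_ip by (simp add: t_def [symmetric] c_def [symmetric] hn_diff_sq)
qed

lemma cauchy_schwarz: "cmod (ip x y) \<le> hn x * hn y"
proof (cases "y = 0")
  case False
  have "0 \<le> (hn x)\<^sup>2 - (cmod (ip x y))\<^sup>2 / (hn y)\<^sup>2"
    using hn_diff_component_sq[OF False, of x] by (metis zero_le_power2)
  moreover have "0 < (hn y)\<^sup>2"
    using False by simp
  ultimately have "(cmod (ip x y))\<^sup>2 \<le> (hn x * hn y)\<^sup>2"
    by (simp add: pos_divide_le_eq power_mult_distrib)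
  then show ?thesis
    by (meson hn_nonneg mult_nonneg_nonneg power2_le_imp_le)
qed simp

lemma hn_triangle: "hn (x + y) \<le> hn x + hn y"
proof -
  have "Re (ip x y) \<le> hn x * hn y"
    using cauchy_schwarz[of x y] complex_Re_le_cmod order_trans by blast
  then have "(hn (x + y))\<^sup>2 \<le> (hn x + hn y)\<^sup>2"
    by (simp add: hn_add_sq power2_sum)
  then show ?thesis by (rule power2_le_imp_le) simp
qed

lemma hn_triangle_diff: "hn (x - z) \<le> hn (x - y) + hn (y - z)"
  using hn_triangle[of "x - y" "y - z"] by simp

lemma hn_diff_le: "hn (x - y) \<le> hn x + hn y"
  using hn_triangle[of x "- y"] by (simp add: hn_minus)

text \<open>Since Im (ip x y) = Re (ip x (sc \<i> y)), an inner product is determined by the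
  real parts of its values.\<close>

lemma ip_eqI_Re:
  assumes "\<And>x y. Re (B x y) = Re (ip x y)" and "\<And>x y. B x (sc \<i> y) = - \<i> * B x y"
  shows "B x y = ip x y"
  using assms(1)[of x y] assms(1)[of x "sc \<i> y"] by (simp add: assms(2) ip_sc_right complex_eq_iff)

section \<open>Convergence and orthogonal projection\<close>

definition hconverges :: "(nat \<Rightarrow> 'a) \<Rightarrow> 'a \<Rightarrow> bool" where
  "hconverges X L \<longleftrightarrow> (\<lambda>n. hn (X n - L)) \<longlonglongrightarrow> 0"

definition hCauchy :: "(nat \<Rightarrow> 'a) \<Rightarrow> bool" where
  "hCauchy X \<longleftrightarrow> (\<forall>e>0. \<exists>N. \<forall>m\<ge>N. \<forall>n\<ge>N. hn (X m - X n) < e)"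

lemma hconverges_iff: "hconverges X L \<longleftrightarrow> (\<forall>e>0. \<exists>N. \<forall>n\<ge>N. hn (X n - L) < e)"
  unfolding hconverges_def LIMSEQ_def dist_real_def by simp

lemma hCauchy_hconverges:
  assumes "hCauchy X"
  shows "\<exists>L. hconverges X L"
proof -
  have "\<forall>X::nat \<Rightarrow> 'a. (\<forall>e>0. \<exists>N. \<forall>m\<ge>N. \<forall>n\<ge>N. hn (X m - X n) < e)
         \<longrightarrow> (\<exists>L. \<forall>e>0. \<exists>N. \<forall>n\<ge>N. hn (X n - L) < e)"
    using hilbert unfolding complex_hilbert_def by (elim conjE) assumption
  from this[THEN spec, THEN mp, OF assms[unfolded hCauchy_def]] show ?thesis
    unfolding hconverges_iff .
qed

lemma hconverges_imp_hCauchy: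
  assumes "hconverges X L"
  shows "hCauchy X"
  unfolding hCauchy_def
proof (intro allI impI)
  fix e :: real
  assume "e > 0"
  then obtain N where N: "\<forall>n\<ge>N. hn (X n - L) < e / 2"
    using assms unfolding hconverges_iff by (meson half_gt_zero)
  have "hn (X m - X n) < e" if "m \<ge> N" "n \<ge> N" for m n
  proof -
    have "hn (X m - L) < e / 2" "hn (X n - L) < e / 2"
      using N that by auto
    then show ?thesis
      using hn_triangle_diff[of "X m" "X n" L] hn_diff_commute[of L "X n"] by linarith
  qed
  then show "\<exists>N. \<forall>m\<ge>N. \<forall>n\<ge>N. hn (X m - X n) < e" by blast
qed

lemma hconverges_hn_diff:
  assumes "hconverges X L"
  shows "(\<lambda>n. hn (y - X n)) \<longlonglongrightarrow> hn (y - L)"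
proof -
  have "\<bar>hn (y - X n) - hn (y - L)\<bar> \<le> hn (X n - L)" for n
    using hn_triangle_diff[of y "X n" L] hn_triangle_diff[of y L "X n"] hn_diff_commute[of L "X n"]
    by linarith
  then have "\<forall>n. norm (hn (y - X n) - hn (y - L)) \<le> hn (X n - L)"
    by simp
  then have "(\<lambda>n. hn (y - X n) - hn (y - L)) \<longlonglongrightarrow> 0"
    using assms unfolding hconverges_def by (rule Lim_null_comparison[OF always_eventually])
  then show ?thesis by (simp add: LIM_zero_iff)
qed

lemma hconverges_unique:
  assumes "hconverges X L" and "hconverges X L'"
  shows "L = L'"
proof -
  have "(\<lambda>n. hn (X n - L) + hn (X n - L')) \<longlonglongrightarrow> 0 + 0"
    using assms unfolding hconverges_def by (rule tendsto_add)
  moreover have "hn (L - L') \<le> hn (X n - L) + hn (X n - L')" for n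
    using hn_triangle_diff[of L L' "X n"] hn_diff_commute[of L "X n"] by simp
  ultimately have "hn (L - L') \<le> 0"
    by (intro LIMSEQ_le_const) auto
  then show ?thesis
    by simp
qed

lemma ip_hconverges_left:
  assumes "hconverges X L"
  shows "(\<lambda>n. ip (X n) y) \<longlonglongrightarrow> ip L y"
proof -
  have "\<forall>n. norm (ip (X n) y - ip L y) \<le> hn (X n - L) * hn y"
    using cauchy_schwarz[of "X _ - L" y] by (simp add: ip_diff_left)
  moreover have "(\<lambda>n. hn (X n - L) * hn y) \<longlonglongrightarrow> 0"
    using assms unfolding hconverges_def by (simp add: tendsto_mult_left_zero)
  ultimately have "(\<lambda>n. ip (X n) y - ip L y) \<longlonglongrightarrow> 0"
    by (rule Lim_null_comparison[OF always_eventually])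
  then show ?thesis by (simp add: LIM_zero_iff)
qed

lemma hconverges_in_hclosure:
  assumes "\<And>n. X n \<in> A" and "hconverges X L"
  shows "L \<in> hclosure ip A"
  unfolding hclosure_def
proof (intro CollectI allI impI)
  fix e :: real
  assume "e > 0"
  then obtain N where "hn (X N - L) < e"
    using assms(2) unfolding hconverges_iff by blast
  then show "\<exists>a\<in>A. hn (L - a) < e"
    using assms(1) hn_diff_commute by metis
qed

lemma hclosure_imp_hconverges:
  assumes "y \<in> hclosure ip A"
  obtains X where "\<And>n. X n \<in> A" and "hconverges X y"
proof -
  have "\<exists>a\<in>A. hn (y - a) < inverse (real (Suc n))" for n
    using assms unfolding hclosure_def by simp
  then obtain X where X: "\<And>n. X n \<in> A" "\<And>n. hn (y - X n) < inverse (real (Suc n))"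
    by metis
  have "\<forall>n. norm (hn (X n - y)) \<le> inverse (real (Suc n))"
    using X(2) hn_diff_commute by (simp add: less_imp_le)
  then have "(\<lambda>n. hn (X n - y)) \<longlonglongrightarrow> 0"
    by (rule Lim_null_comparison[OF always_eventually LIMSEQ_inverse_real_of_nat])
  then show ?thesis
    using that X(1) unfolding hconverges_def by blast
qed

lemma closed_hsubspaceD:
  assumes "closed_hsubspace sc ip M"
  shows "0 \<in> M" and "\<And>a b. a \<in> M \<Longrightarrow> b \<in> M \<Longrightarrow> a + b \<in> M"
    and "\<And>c a. a \<in> M \<Longrightarrow> sc c a \<in> M" and "\<And>x. x \<in> hclosure ip M \<Longrightarrow> x \<in> M"
  using assms unfolding closed_hsubspace_def by blast+

text \<open>The parallelogram law applied to x - a and x - b, whose sum is twice x minus the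
  midpoint of a and b.\<close>

lemma subspace_diff_sq_le:
  assumes M: "closed_hsubspace sc ip M" and D: "\<And>m. m \<in> M \<Longrightarrow> D \<le> (hn (x - m))\<^sup>2"
    and "a \<in> M" "b \<in> M"
  shows "(hn (a - b))\<^sup>2 \<le> 2 * (hn (x - a))\<^sup>2 + 2 * (hn (x - b))\<^sup>2 - 4 * D"
proof -
  have "sc (1 / 2) (a + b) \<in> M"
    using assms closed_hsubspaceD[OF M] by blast
  then have "4 * D \<le> 4 * (hn (x - sc (1 / 2) (a + b)))\<^sup>2"
    using D by simp
  also have "\<dots> = (hn (sc 2 (x - sc (1 / 2) (a + b))))\<^sup>2"
    by (simp add: hn_sc power_mult_distrib)
  also have "sc 2 (x - sc (1 / 2) (a + b)) = (x - a) + (x - b)"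
    using sc_add_left[of 1 1 x] by (simp add: sc_diff_right sc_sc sc_add_right algebra_simps)
  finally show ?thesis
    using parallelogram_law[of "x - a" "x - b"] hn_diff_commute[of a b] by (simp add: algebra_simps)
qed

lemma minimizing_sequence_hCauchy:
  assumes M: "closed_hsubspace sc ip M" and D: "\<And>m. m \<in> M \<Longrightarrow> D \<le> (hn (x - m))\<^sup>2"
    and X: "\<And>n. X n \<in> M" "\<And>n. (hn (x - X n))\<^sup>2 < D + 1 / Suc n"
  shows "hCauchy X"
  unfolding hCauchy_def
proof (intro allI impI)
  fix e :: real
  assume "e > 0"
  then obtain N where N: "1 / Suc N < e\<^sup>2 / 4"
    by (metis nat_approx_posE zero_less_divide_iff zero_less_numeral zero_less_power)
  have "hn (X i - X j) < e" if "i \<ge> N" "j \<ge> N" for i j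
  proof -
    have "1 / Suc i \<le> 1 / Suc N" "1 / Suc j \<le> 1 / Suc N"
      using that by (simp_all add: frac_le)
    then have "(hn (X i - X j))\<^sup>2 < e\<^sup>2"
      using subspace_diff_sq_le[OF M D X(1) X(1), of i j] X(2)[of i] X(2)[of j] N by linarith
    then show ?thesis
      using \<open>e > 0\<close> by (simp add: power_less_imp_less_base)
  qed
  then show "\<exists>N. \<forall>i\<ge>N. \<forall>j\<ge>N. hn (X i - X j) < e" by blast
qed

lemma best_approximation_exists:
  assumes M: "closed_hsubspace sc ip M"
  shows "\<exists>p\<in>M. \<forall>m\<in>M. hn (x - p) \<le> hn (x - m)"
proof -
  define D where "D = Inf ((\<lambda>m. (hn (x - m))\<^sup>2) ` M)"
  have M0: "0 \<in> M" by (rule closed_hsubspaceD(1)[OF M])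
  have bdd: "bdd_below ((\<lambda>m. (hn (x - m))\<^sup>2) ` M)"
    by (rule bdd_belowI[of _ 0]) auto
  have D: "D \<le> (hn (x - m))\<^sup>2" if "m \<in> M" for m
    unfolding D_def using bdd that by (auto intro: cInf_lower)
  have "\<exists>m\<in>M. (hn (x - m))\<^sup>2 < D + 1 / Suc n" for n
    using cInf_lessD[of "(\<lambda>m. (hn (x - m))\<^sup>2) ` M" "D + 1 / Suc n"] M0 unfolding D_def by auto
  then obtain X where X: "\<And>n. X n \<in> M" "\<And>n. (hn (x - X n))\<^sup>2 < D + 1 / Suc n"
    by metis
  obtain p where p: "hconverges X p"
    using hCauchy_hconverges minimizing_sequence_hCauchy[OF M D X] by blast
  have "p \<in> M"
    using closed_hsubspaceD(4)[OF M] hconverges_in_hclosure[OF X(1) p] by blast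
  have "(\<lambda>n. (hn (x - X n))\<^sup>2) \<longlonglongrightarrow> (hn (x - p))\<^sup>2"
    using hconverges_hn_diff[OF p] by (rule tendsto_power)
  moreover have "(\<lambda>n. D + 1 / Suc n) \<longlonglongrightarrow> D + 0"
    using LIMSEQ_inverse_real_of_nat by (intro tendsto_add tendsto_const) (simp add: inverse_eq_divide)
  ultimately have "(hn (x - p))\<^sup>2 \<le> D"
    using X(2) by (intro LIMSEQ_le[where X = "\<lambda>n. (hn (x - X n))\<^sup>2"]) (auto intro: less_imp_le)
  then show ?thesis
    using D \<open>p \<in> M\<close> by (meson hn_nonneg order_trans power2_le_imp_le)
qed

lemma best_approximation_orthogonal:
  assumes M: "closed_hsubspace sc ip M" and "p \<in> M" and "m \<in> M"
    and best: "\<And>m. m \<in> M \<Longrightarrow> hn (x - p) \<le> hn (x - m)"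
  shows "ip (x - p) m = 0"
proof (cases "m = 0")
  case False
  define t where "t = ip (x - p) m / ip m m"
  have "p + sc t m \<in> M"
    using assms closed_hsubspaceD[OF M] by blast
  then have "(hn (x - p))\<^sup>2 \<le> (hn ((x - p) - sc t m))\<^sup>2"
    using best by (simp add: diff_diff_eq power_mono)
  also have "\<dots> = (hn (x - p))\<^sup>2 - (cmod (ip (x - p) m))\<^sup>2 / (hn m)\<^sup>2"
    unfolding t_def by (rule hn_diff_component_sq[OF False])
  finally have "(cmod (ip (x - p) m))\<^sup>2 / (hn m)\<^sup>2 \<le> 0" by simp
  then show ?thesis
    using hn_pos[OF False] False by (simp add: divide_le_0_iff)
qed simp

lemma projection_exists:
  assumes "closed_hsubspace sc ip M"
  shows "\<exists>p\<in>M. \<forall>m\<in>M. ip (x - p) m = 0"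
  using best_approximation_exists[OF assms, of x] best_approximation_orthogonal[OF assms] by blast

section \<open>Isometries and their adjoints\<close>

lemma isometry_add: "hisometry sc ip T \<Longrightarrow> T (x + y) = T x + T y"
  and isometry_sc: "hisometry sc ip T \<Longrightarrow> T (sc c x) = sc c (T x)"
  and isometry_hn: "hisometry sc ip T \<Longrightarrow> hn (T x) = hn x"
  unfolding hisometry_def clinear_map_def by blast+

lemma isometry_zero: "hisometry sc ip T \<Longrightarrow> T 0 = 0"
  using isometry_sc[of T 0 0] by simp

lemma isometry_diff: "hisometry sc ip T \<Longrightarrow> T (x - y) = T x - T y"
  using isometry_add[of T x "- y"] isometry_sc[of T "- 1" y] by (simp add: sc_minus_left)

lemma isometry_ip:
  assumes T: "hisometry sc ip T"
  shows "ip (T x) (T y) = ip x y"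
proof (rule ip_eqI_Re)
  show "Re (ip (T x) (T y)) = Re (ip x y)" for x y
    using hn_add_sq[of "T x" "T y"] hn_add_sq[of x y] isometry_add[OF T, of x y]
      isometry_hn[OF T, of "x + y"] isometry_hn[OF T, of x] isometry_hn[OF T, of y]
    by simp
  show "ip (T x) (T (sc \<i> y)) = - \<i> * ip (T x) (T y)" for x y
    by (simp add: isometry_sc[OF T] ip_sc_right)
qed

lemma isometry_comp: "hisometry sc ip T \<Longrightarrow> hisometry sc ip S \<Longrightarrow> hisometry sc ip (T \<circ> S)"
  by (simp add: hisometry_def clinear_map_def)

lemma isometry_funpow:
  assumes "hisometry sc ip T"
  shows "hisometry sc ip (T ^^ n)"
proof (induction n)
  case 0
  show ?case by (simp add: hisometry_def clinear_map_def)
next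
  case (Suc n)
  then show ?case using isometry_comp[OF assms] by (simp only: funpow.simps(2))
qed

lemma isometry_range_closed:
  assumes T: "hisometry sc ip T"
  shows "closed_hsubspace sc ip (range T)"
  unfolding closed_hsubspace_def
proof (intro conjI ballI allI subsetI)
  show "0 \<in> range T"
    using rangeI[of T 0] by (simp add: isometry_zero[OF T])
  show "a + b \<in> range T" if "a \<in> range T" "b \<in> range T" for a b
    using that by (auto simp: isometry_add[OF T, symmetric])
  show "sc c a \<in> range T" if "a \<in> range T" for a c
    using that by (auto simp: isometry_sc[OF T, symmetric])
  fix y
  assume "y \<in> hclosure ip (range T)"
  then obtain Y where Y: "\<And>n. Y n \<in> range T" "hconverges Y y"
    using hclosure_imp_hconverges by blast
  then have "\<forall>n. \<exists>x. Y n = T x"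
    by blast
  then obtain X where X: "\<And>n. Y n = T (X n)"
    by metis
  have hn_T: "hn (T a - T b) = hn (a - b)" for a b
    by (simp add: isometry_diff[OF T, symmetric] isometry_hn[OF T])
  have "hCauchy X"
    using hconverges_imp_hCauchy[OF Y(2)] by (simp add: hCauchy_def X hn_T)
  then obtain z where "hconverges X z"
    using hCauchy_hconverges by blast
  then have "hconverges Y (T z)"
    by (simp add: hconverges_def X hn_T)
  then show "y \<in> range T"
    using hconverges_unique[OF Y(2)] by blast
qed

text \<open>Adjoints of isometries exist because their ranges are closed: the adjoint sends y to
  the preimage of its orthogonal projection onto range T.\<close>

lemma isometry_adjoint_exists:
  assumes T: "hisometry sc ip T"
  shows "\<exists>S. \<forall>x y. ip (T x) y = ip x (S y)"
proof -
  have "\<exists>z. \<forall>x. ip (T x) y = ip x z" for y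
  proof -
    obtain z where "\<forall>x. ip (y - T z) (T x) = 0"
      using projection_exists[OF isometry_range_closed[OF T], of y] by blast
    then have "ip (T x) y = ip x z" for x
      using ip_commute[of "y - T z" "T x"] by (simp add: ip_diff_right isometry_ip[OF T])
    then show ?thesis by blast
  qed
  then show ?thesis by metis
qed

lemma hadj_eq:
  assumes T: "hisometry sc ip T"
  shows "ip (T x) y = ip x (hadj ip T y)"
proof -
  obtain S where S: "\<forall>x y. ip (T x) y = ip x (S y)"
    using isometry_adjoint_exists[OF T] by blast
  have "\<exists>!S. \<forall>x y. ip (T x) y = ip x (S y)"
  proof (rule ex1I[of _ S])
    show "S' = S" if "\<forall>x y. ip (T x) y = ip x (S' y)" for S'
      using that S by (metis ext ip_eq_right)
  qed (rule S)
  from theI'[OF this] show ?thesis unfolding hadj_def by blast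
qed

lemma hadj_eqI: "hisometry sc ip T \<Longrightarrow> (\<And>x. ip (T x) y = ip x z) \<Longrightarrow> hadj ip T y = z"
  by (metis hadj_eq ip_eq_right)

lemma hadj_add: "hisometry sc ip T \<Longrightarrow> hadj ip T (x + y) = hadj ip T x + hadj ip T y"
  and hadj_sc: "hisometry sc ip T \<Longrightarrow> hadj ip T (sc c x) = sc c (hadj ip T x)"
  and hadj_zero: "hisometry sc ip T \<Longrightarrow> hadj ip T 0 = 0"
  and hadj_diff: "hisometry sc ip T \<Longrightarrow> hadj ip T (x - y) = hadj ip T x - hadj ip T y"
  by (rule hadj_eqI; simp add: ip_add_right ip_sc_right ip_diff_right hadj_eq)+

lemma ip_hadj_eq: "hisometry sc ip T \<Longrightarrow> ip (hadj ip T x) y = ip x (T y)"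
  using hadj_eq[of T y x] ip_commute[of "T y" x] ip_commute[of y "hadj ip T x"] by simp

lemma hn_hadj_le:
  assumes T: "hisometry sc ip T"
  shows "hn (hadj ip T y) \<le> hn y"
proof -
  let ?a = "hadj ip T y"
  have "(hn ?a)\<^sup>2 = Re (ip (T ?a) y)"
    using hadj_eq[OF T, of ?a y] by (simp add: hn_sq)
  also have "\<dots> \<le> hn ?a * hn y"
    using cauchy_schwarz[of "T ?a" y] complex_Re_le_cmod[of "ip (T ?a) y"] isometry_hn[OF T]
    by simp
  finally show ?thesis
    by (metis hn_nonneg mult_le_cancel_left_pos not_le power2_eq_square zero_less_mult_iff
        less_eq_real_def)
qed

lemma hadj_funpow:
  assumes T: "hisometry sc ip T"
  shows "ip ((T ^^ n) x) y = ip x ((hadj ip T ^^ n) y)"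
proof (induction n arbitrary: y)
  case (Suc n)
  have "ip ((T ^^ Suc n) x) y = ip ((T ^^ n) x) (hadj ip T y)"
    by (simp add: hadj_eq[OF T])
  also have "\<dots> = ip x ((hadj ip T ^^ n) (hadj ip T y))"
    by (rule Suc)
  finally show ?case
    by (simp add: funpow_swap1)
qed simp

lemma funpow_hadj_zero: "hisometry sc ip T \<Longrightarrow> (hadj ip T ^^ n) 0 = 0"
  by (induction n) (simp_all add: hadj_zero)

lemma ip_funpow_hadj_kernel:
  assumes A: "hisometry sc ip A" and B: "hisometry sc ip B"
    and commute: "\<And>x. hadj ip A (B x) = B (hadj ip A x)"
    and w: "hadj ip A w = 0" and "b \<noteq> 0"
  shows "ip ((B ^^ a) w) ((A ^^ b) v) = 0"
proof -
  obtain k where b: "b = Suc k"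
    using \<open>b \<noteq> 0\<close> not0_implies_Suc by blast
  have "(hadj ip A ^^ b) ((B ^^ a) w) = (B ^^ a) ((hadj ip A ^^ b) w)"
    using funpow_commute[of "hadj ip A" B] commute by blast
  also have "(hadj ip A ^^ b) w = 0"
    unfolding b funpow_Suc_right using w funpow_hadj_zero[OF A] by simp
  finally have "ip ((A ^^ b) v) ((B ^^ a) w) = 0"
    by (simp add: hadj_funpow[OF A] isometry_zero[OF isometry_funpow[OF B]])
  then show ?thesis
    using ip_commute[of "(B ^^ a) w" "(A ^^ b) v"] by simp
qed

section \<open>Spans and density\<close>

lemma hspan_superset: "v \<in> S \<Longrightarrow> v \<in> hspan sc S"
  unfolding hspan_def by (rule CollectI, rule exI[of _ "{v}"], rule exI[of _ "\<lambda>_. 1"]) simp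

lemma hspan_sum:
  assumes "finite F" "F \<subseteq> S"
  shows "(\<Sum>v\<in>F. sc (c v) v) \<in> hspan sc S"
  using assms unfolding hspan_def by blast

lemma hspan_minimal:
  assumes "0 \<in> W" and "\<And>a b. a \<in> W \<Longrightarrow> b \<in> W \<Longrightarrow> a + b \<in> W"
    and "\<And>k a. a \<in> W \<Longrightarrow> sc k a \<in> W" and "S \<subseteq> W"
  shows "hspan sc S \<subseteq> W"
proof
  fix x
  assume "x \<in> hspan sc S"
  then obtain F c where F: "finite F" "F \<subseteq> S" and x: "x = (\<Sum>v\<in>F. sc (c v) v)"
    unfolding hspan_def by blast
  from F have "(\<Sum>v\<in>F. sc (c v) v) \<in> W"
    by (induction F rule: finite_induct) (use assms in auto)
  then show "x \<in> W" using x by simp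
qed

lemma hspanE:
  assumes "a \<in> hspan sc S"
  obtains F c where "finite F" "F \<subseteq> S" "a = (\<Sum>v\<in>F. sc (c v) v)"
  using assms unfolding hspan_def by blast

lemma hspan_zero: "0 \<in> hspan sc S"
  using hspan_sum[of "{}" S] by simp

lemma hspan_add:
  assumes "a \<in> hspan sc S" and "b \<in> hspan sc S"
  shows "a + b \<in> hspan sc S"
proof -
  obtain F c where F: "finite F" "F \<subseteq> S" and a: "a = (\<Sum>v\<in>F. sc (c v) v)"
    using assms(1) by (rule hspanE)
  obtain G d where G: "finite G" "G \<subseteq> S" and b: "b = (\<Sum>v\<in>G. sc (d v) v)"
    using assms(2) by (rule hspanE)
  define c' where "c' v = (if v \<in> F then c v else 0)" for v
  define d' where "d' v = (if v \<in> G then d v else 0)" for v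
  have "a = (\<Sum>v\<in>F \<union> G. sc (c' v) v)"
    unfolding a using F(1) G(1) by (intro sum.mono_neutral_cong_left) (auto simp: c'_def)
  moreover have "b = (\<Sum>v\<in>F \<union> G. sc (d' v) v)"
    unfolding b using F(1) G(1) by (intro sum.mono_neutral_cong_left) (auto simp: d'_def)
  ultimately have "a + b = (\<Sum>v\<in>F \<union> G. sc (c' v + d' v) v)"
    by (simp add: sum.distrib sc_add_left)
  then show ?thesis
    using F G hspan_sum[of "F \<union> G" S] by simp
qed

lemma hspan_sc:
  assumes "a \<in> hspan sc S"
  shows "sc k a \<in> hspan sc S"
proof -
  obtain F c where F: "finite F" "F \<subseteq> S" and a: "a = (\<Sum>v\<in>F. sc (c v) v)"
    using assms by (rule hspanE)
  have "sc k a = (\<Sum>v\<in>F. sc (k * c v) v)"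
    unfolding a by (simp add: sc_sum_right sc_sc)
  then show ?thesis
    using hspan_sum[OF F] by simp
qed

lemma hspan_mono: "S \<subseteq> hspan sc S' \<Longrightarrow> hspan sc S \<subseteq> hspan sc S'"
  by (rule hspan_minimal) (auto intro: hspan_zero hspan_add hspan_sc)

lemma hclosure_mono: "A \<subseteq> B \<Longrightarrow> hclosure ip A \<subseteq> hclosure ip B"
  unfolding hclosure_def by blast

lemma bounded_functional_dense_zero:
  fixes \<phi> :: "'a \<Rightarrow> complex"
  assumes dense: "hclosure ip (hspan sc S) = UNIV"
    and add: "\<And>a b. \<phi> (a + b) = \<phi> a + \<phi> b" and hom: "\<And>k a. \<phi> (sc k a) = k * \<phi> a"
    and bounded: "\<And>a. norm (\<phi> a) \<le> C * hn a"
    and zero: "\<And>v. v \<in> S \<Longrightarrow> \<phi> v = 0"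
  shows "\<phi> x = 0"
proof -
  have "hspan sc S \<subseteq> {y. \<phi> y = 0}"
    using hom[of 0 0] by (intro hspan_minimal) (auto simp: add hom zero)
  moreover obtain X where "\<And>n. X n \<in> hspan sc S" "hconverges X x"
    using dense hclosure_imp_hconverges by blast
  ultimately have "\<phi> x = \<phi> (x - X n)" for n
    using add[of "x - X n" "X n"] by auto
  then have "\<forall>n. norm (\<phi> x) \<le> C * hn (x - X n)"
    using bounded by metis
  moreover have "(\<lambda>n. C * hn (x - X n)) \<longlonglongrightarrow> 0"
    using tendsto_mult_left[OF hconverges_hn_diff[OF \<open>hconverges X x\<close>, of x], of C] by simp
  ultimately have "norm (\<phi> x) \<le> 0"
    by (intro LIMSEQ_le_const) auto
  then show ?thesis by simp
qed

lemma bounded_operator_dense_eq: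
  assumes dense: "hclosure ip (hspan sc S) = UNIV"
    and "\<And>a b. A (a + b) = A a + A b" and "\<And>k a. A (sc k a) = sc k (A a)"
    and "\<And>a. hn (A a) \<le> hn a"
    and "\<And>a b. B (a + b) = B a + B b" and "\<And>k a. B (sc k a) = sc k (B a)"
    and "\<And>a. hn (B a) \<le> hn a"
    and "\<And>v. v \<in> S \<Longrightarrow> A v = B v"
  shows "A x = B x"
proof -
  have "ip (A v - B v) z = 0" for v z
  proof (rule bounded_functional_dense_zero[OF dense, where \<phi> = "\<lambda>v. ip (A v - B v) z"
        and C = "2 * hn z"])
    show "norm (ip (A a - B a) z) \<le> 2 * hn z * hn a" for a
    proof -
      have "hn (A a - B a) \<le> 2 * hn a"
        using hn_diff_le[of "A a" "B a"] assms(4,7)[of a] by linarith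
      then have "hn (A a - B a) * hn z \<le> 2 * hn a * hn z"
        by (simp add: mult_right_mono)
      then show ?thesis
        using cauchy_schwarz[of "A a - B a" z] by (simp add: mult.commute mult.left_commute)
    qed
  qed (use assms in \<open>simp_all add: ip_add_left ip_sc_left ip_diff_left algebra_simps\<close>)
  then show ?thesis
    using ip_self_eq_zero[of "A x - B x"] by simp
qed

lemma isometry_hadj_commute_dense:
  assumes A: "hisometry sc ip A" and B: "hisometry sc ip B"
    and dense: "hclosure ip (hspan sc S) = UNIV"
    and commute: "\<And>v. v \<in> S \<Longrightarrow> hadj ip A (B v) = B (hadj ip A v)"
  shows "hadj ip A (B x) = B (hadj ip A x)"
proof (rule bounded_operator_dense_eq[OF dense _ _ _ _ _ _ commute])
  show "hn (hadj ip A (B a)) \<le> hn a" "hn (B (hadj ip A a)) \<le> hn a" for a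
    using hn_hadj_le[OF A, of "B a"] hn_hadj_le[OF A, of a] isometry_hn[OF B] by simp_all
qed (simp_all add: isometry_add[OF B] isometry_sc[OF B] hadj_add[OF A] hadj_sc[OF A])

section \<open>Orthonormal families\<close>

definition orthonormal :: "('i \<Rightarrow> 'a) \<Rightarrow> bool" where
  "orthonormal e \<longleftrightarrow> (\<forall>p q. ip (e p) (e q) = (if p = q then 1 else 0))"

definition orthonormal_basis :: "('i \<Rightarrow> 'a) \<Rightarrow> bool" where
  "orthonormal_basis e \<longleftrightarrow> orthonormal e \<and> hclosure ip (hspan sc (range e)) = UNIV"

context
  fixes e :: "'i \<Rightarrow> 'a"
  assumes e: "orthonormal e"
begin

lemma orthonormal_ip: "ip (e p) (e q) = (if p = q then 1 else 0)"
  using e unfolding orthonormal_def by blast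

lemma orthonormal_inj: "inj e"
  by (rule injI) (metis orthonormal_ip zero_neq_one)

lemma ip_orthonormal_sum:
  "finite F \<Longrightarrow> ip (\<Sum>p\<in>F. sc (a p) (e p)) (e q) = (if q \<in> F then a q else 0)"
  by (simp add: ip_sum_left ip_sc_left orthonormal_ip if_distrib sum.delta cong: if_cong)

lemma ip_orthonormal_sum_right:
  "finite F \<Longrightarrow> ip (e q) (\<Sum>p\<in>F. sc (a p) (e p)) = (if q \<in> F then cnj (a q) else 0)"
  using ip_orthonormal_sum[of F a q] ip_commute[of "e q" "\<Sum>p\<in>F. sc (a p) (e p)"] by simp

lemma hn_orthonormal_sum_sq:
  assumes "finite F"
  shows "(hn (\<Sum>p\<in>F. sc (a p) (e p)))\<^sup>2 = (\<Sum>p\<in>F. (cmod (a p))\<^sup>2)"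
proof -
  let ?s = "\<Sum>p\<in>F. sc (a p) (e p)"
  have "ip ?s ?s = (\<Sum>p\<in>F. a p * ip (e p) ?s)"
    by (simp add: ip_sum_left ip_sc_left)
  also have "\<dots> = of_real (\<Sum>p\<in>F. (cmod (a p))\<^sup>2)"
    using assms by (simp add: ip_orthonormal_sum_right mult_cnj_eq_cmod_sq)
  finally show ?thesis
    using ip_self[of ?s] by (metis of_real_eq_iff)
qed

lemma hn_diff_orthonormal_sum_sq:
  assumes "finite F"
  shows "(hn (x - (\<Sum>p\<in>F. sc (ip x (e p)) (e p))))\<^sup>2 = (hn x)\<^sup>2 - (\<Sum>p\<in>F. (cmod (ip x (e p)))\<^sup>2)"
proof -
  let ?s = "\<Sum>p\<in>F. sc (ip x (e p)) (e p)"
  have "ip x ?s = of_real (\<Sum>p\<in>F. (cmod (ip x (e p)))\<^sup>2)"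
    by (simp add: ip_sum_right ip_sc_right mult_cnj_eq_cmod_sq mult.commute)
  then show ?thesis
    using hn_orthonormal_sum_sq[OF assms] by (simp add: hn_diff_sq)
qed

lemma bessel_finite: "finite F \<Longrightarrow> (\<Sum>p\<in>F. (cmod (ip x (e p)))\<^sup>2) \<le> (hn x)\<^sup>2"
  using hn_diff_orthonormal_sum_sq[of F x] by (metis diff_ge_0_iff_ge zero_le_power2)

lemma orthonormal_coeffs_summable: "(\<lambda>p. (cmod (ip x (e p)))\<^sup>2) summable_on UNIV"
  by (rule nonneg_bdd_above_summable_on) (auto intro!: bdd_aboveI2 bessel_finite)

lemma bessel: "(\<Sum>\<^sub>\<infinity>p. (cmod (ip x (e p)))\<^sup>2) \<le> (hn x)\<^sup>2"
  by (rule infsum_le_finite_sums[OF orthonormal_coeffs_summable]) (rule bessel_finite)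

text \<open>x minus its Fourier partial sum over F is orthogonal to every e p with p in F.\<close>

lemma orthonormal_sum_best_approximation:
  assumes "finite F"
  shows "hn (x - (\<Sum>p\<in>F. sc (ip x (e p)) (e p))) \<le> hn (x - (\<Sum>p\<in>F. sc (d p) (e p)))"
proof -
  define s where "s = (\<Sum>p\<in>F. sc (ip x (e p)) (e p))"
  define t where "t = (\<Sum>p\<in>F. sc (d p) (e p))"
  have "s - t = (\<Sum>p\<in>F. sc (ip x (e p) - d p) (e p))"
    by (simp add: s_def t_def sc_diff_left sum_subtractf)
  then have "ip (x - s) (s - t) = (\<Sum>p\<in>F. cnj (ip x (e p) - d p) * ip (x - s) (e p))"
    by (simp add: ip_sum_right ip_sc_right)
  also have "\<dots> = 0"
    using assms by (simp add: s_def ip_diff_left ip_orthonormal_sum)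
  finally have "(hn (x - t))\<^sup>2 = (hn (x - s))\<^sup>2 + (hn (s - t))\<^sup>2"
    using hn_add_sq[of "x - s" "s - t"] by simp
  then have "hn (x - s) \<le> hn (x - t)"
    by (simp add: power2_le_imp_le)
  then show ?thesis
    unfolding s_def t_def .
qed

end

text \<open>Riesz--Fischer: the squared distances of these partial sums are differences of partial
  sums of a convergent series.\<close>

lemma orthonormal_partial_sums_hCauchy:
  fixes e :: "nat \<times> nat \<Rightarrow> 'a"
  assumes e: "orthonormal e" and a: "(\<lambda>p. (cmod (a p))\<^sup>2) summable_on UNIV"
  shows "hCauchy (\<lambda>N. \<Sum>p\<in>{..<N} \<times> {..<N}. sc (a p) (e p))"
proof -
  define Q where "Q N = {..<N} \<times> {..<N}" for N :: nat
  define s where "s = (\<lambda>N. \<Sum>p\<in>Q N. sc (a p) (e p))"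
  define \<sigma> where "\<sigma> = (\<lambda>N. \<Sum>p\<in>Q N. (cmod (a p))\<^sup>2)"
  have "\<sigma> \<longlonglongrightarrow> (\<Sum>\<^sub>\<infinity>p. (cmod (a p))\<^sup>2)"
    using filterlim_compose[OF a[unfolded summable_iff_has_sum_infsum has_sum_def]
        filterlim_squares_finite_subsets]
    unfolding \<sigma>_def Q_def .
  then have "Cauchy \<sigma>"
    by (rule LIMSEQ_imp_Cauchy)
  have Q: "finite (Q N)" "N \<le> M \<Longrightarrow> Q N \<subseteq> Q M" for N M
    unfolding Q_def by auto
  have diff: "(hn (s M - s N))\<^sup>2 = \<sigma> M - \<sigma> N" if "N \<le> M" for N M
  proof -
    have "s M - s N = (\<Sum>p\<in>Q M - Q N. sc (a p) (e p))"
      unfolding s_def by (simp add: sum_diff Q that)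
    then show ?thesis
      unfolding \<sigma>_def using hn_orthonormal_sum_sq[OF e, of "Q M - Q N" a]
      by (simp add: sum_diff Q that)
  qed
  have "hCauchy s"
    unfolding hCauchy_def
  proof (intro allI impI)
    fix \<epsilon> :: real
    assume "\<epsilon> > 0"
    then obtain K where K: "\<forall>m\<ge>K. \<forall>n\<ge>K. norm (\<sigma> m - \<sigma> n) < \<epsilon>\<^sup>2"
      using CauchyD[OF \<open>Cauchy \<sigma>\<close>, of "\<epsilon>\<^sup>2"] by auto
    have "hn (s m - s n) < \<epsilon>" if "n \<ge> K" "n \<le> m" for m n
    proof -
      have "norm (\<sigma> m - \<sigma> n) < \<epsilon>\<^sup>2"
        using K that by auto
      then have "(hn (s m - s n))\<^sup>2 < \<epsilon>\<^sup>2"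
        using diff[OF that(2)] by (metis abs_ge_self order_le_less_trans real_norm_def)
      then show ?thesis
        using \<open>\<epsilon> > 0\<close> by (simp add: power_less_imp_less_base)
    qed
    then have "hn (s m - s n) < \<epsilon>" if "m \<ge> K" "n \<ge> K" for m n
      using that hn_diff_commute[of "s m" "s n"] by (metis nat_le_linear)
    then show "\<exists>N. \<forall>m\<ge>N. \<forall>n\<ge>N. hn (s m - s n) < \<epsilon>"
      by blast
  qed
  then show ?thesis
    unfolding s_def Q_def .
qed

lemma orthonormal_synthesis:
  fixes e :: "nat \<times> nat \<Rightarrow> 'a"
  assumes e: "orthonormal e" and a: "(\<lambda>p. (cmod (a p))\<^sup>2) summable_on UNIV"
  shows "\<exists>x. \<forall>p. ip x (e p) = a p"
proof -
  define s where "s = (\<lambda>N. \<Sum>p\<in>{..<N} \<times> {..<N}. sc (a p) (e p))"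
  obtain x where x: "hconverges s x"
    using hCauchy_hconverges orthonormal_partial_sums_hCauchy[OF e a] unfolding s_def by blast
  have "ip x (e q) = a q" for q
  proof (rule LIMSEQ_unique[OF ip_hconverges_left[OF x]])
    have "\<forall>N\<ge>Suc (max (fst q) (snd q)). ip (s N) (e q) = a q"
      by (auto simp: s_def ip_orthonormal_sum[OF e] mem_Times_iff)
    then show "(\<lambda>N. ip (s N) (e q)) \<longlonglongrightarrow> a q"
      by (intro tendsto_eventually eventually_sequentiallyI) blast
  qed
  then show ?thesis by blast
qed

context
  fixes e :: "'i \<Rightarrow> 'a"
  assumes e: "orthonormal_basis e"
begin

lemma orthonormal_basis_orthonormal: "orthonormal e"
  and orthonormal_basis_dense: "hclosure ip (hspan sc (range e)) = UNIV"
  using e unfolding orthonormal_basis_def by blast+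

lemma parseval_hn: "(hn x)\<^sup>2 = (\<Sum>\<^sub>\<infinity>p. (cmod (ip x (e p)))\<^sup>2)"
proof (rule antisym[OF field_le_epsilon bessel[OF orthonormal_basis_orthonormal]])
  fix \<epsilon> :: real
  assume "\<epsilon> > 0"
  have "x \<in> hclosure ip (hspan sc (range e))"
    using orthonormal_basis_dense by simp
  moreover have "sqrt \<epsilon> > 0"
    using \<open>\<epsilon> > 0\<close> by simp
  ultimately obtain a where a: "a \<in> hspan sc (range e)" "hn (x - a) < sqrt \<epsilon>"
    unfolding hclosure_def by blast
  obtain F' d where F': "finite F'" "F' \<subseteq> range e" and a_eq: "a = (\<Sum>v\<in>F'. sc (d v) v)"
    using a(1) by (rule hspanE)
  define F where "F = e -` F'"
  have inj: "inj e"
    by (rule orthonormal_inj[OF orthonormal_basis_orthonormal])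
  have F: "finite F"
    unfolding F_def using F'(1) inj by (simp add: finite_vimageI)
  have "e ` F = F'"
    unfolding F_def using F'(2) by auto
  then have a_F: "a = (\<Sum>p\<in>F. sc (d (e p)) (e p))"
    unfolding a_eq using inj by (auto simp: sum.reindex inj_on_subset)
  have "(hn x)\<^sup>2 - (\<Sum>p\<in>F. (cmod (ip x (e p)))\<^sup>2) = (hn (x - (\<Sum>p\<in>F. sc (ip x (e p)) (e p))))\<^sup>2"
    by (rule hn_diff_orthonormal_sum_sq[OF orthonormal_basis_orthonormal F, symmetric])
  also have "\<dots> \<le> (hn (x - a))\<^sup>2"
    unfolding a_F
    by (rule power_mono[OF orthonormal_sum_best_approximation[OF orthonormal_basis_orthonormal F]]) simp
  also have "\<dots> < (sqrt \<epsilon>)\<^sup>2"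
    by (rule power_strict_mono[OF a(2)]) simp_all
  also have "\<dots> = \<epsilon>"
    using \<open>\<epsilon> > 0\<close> by simp
  finally show "(hn x)\<^sup>2 \<le> (\<Sum>\<^sub>\<infinity>p. (cmod (ip x (e p)))\<^sup>2) + \<epsilon>"
    using finite_sum_le_infsum[OF orthonormal_coeffs_summable[OF orthonormal_basis_orthonormal] F,
        of x]
    by simp
qed

lemma parseval_ip: "ip x y = (\<Sum>\<^sub>\<infinity>p. ip x (e p) * cnj (ip y (e p)))"
proof (rule ip_eqI_Re[symmetric])
  have sq: "(\<lambda>p. (cmod (ip x (e p)))\<^sup>2) summable_on UNIV" for x
    by (rule orthonormal_coeffs_summable[OF orthonormal_basis_orthonormal])
  have sm: "(\<lambda>p. ip x (e p) * cnj (ip y (e p))) summable_on UNIV" for x y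
    by (rule summable_on_mult_cnj[OF sq sq])
  show "Re (\<Sum>\<^sub>\<infinity>p. ip x (e p) * cnj (ip y (e p))) = Re (ip x y)" for x y
  proof -
    define c where "c p = ip x (e p) * cnj (ip y (e p))" for p
    have "c summable_on UNIV"
      unfolding c_def by (rule sm)
    have "(hn (x + y))\<^sup>2 = (\<Sum>\<^sub>\<infinity>p. ((cmod (ip x (e p)))\<^sup>2 + (cmod (ip y (e p)))\<^sup>2) + 2 * Re (c p))"
      unfolding parseval_hn[of "x + y"] ip_add_left cmod_add_sq c_def ..
    also have "\<dots> = (\<Sum>\<^sub>\<infinity>p. (cmod (ip x (e p)))\<^sup>2 + (cmod (ip y (e p)))\<^sup>2) + (\<Sum>\<^sub>\<infinity>p. 2 * Re (c p))"
      unfolding c_def by (intro infsum_add summable_on_add summable_on_cmult_right summable_on_Re sq sm)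
    also have "(\<Sum>\<^sub>\<infinity>p. (cmod (ip x (e p)))\<^sup>2 + (cmod (ip y (e p)))\<^sup>2) = (hn x)\<^sup>2 + (hn y)\<^sup>2"
      unfolding parseval_hn by (intro infsum_add sq)
    also have "(\<Sum>\<^sub>\<infinity>p. 2 * Re (c p)) = 2 * Re (\<Sum>\<^sub>\<infinity>p. c p)"
      using \<open>c summable_on UNIV\<close> by (simp add: infsum_cmult_right' infsum_Re)
    finally show ?thesis
      using hn_add_sq[of x y] unfolding c_def by simp
  qed
  show "(\<Sum>\<^sub>\<infinity>p. ip x (e p) * cnj (ip (sc \<i> y) (e p)))
        = - \<i> * (\<Sum>\<^sub>\<infinity>p. ip x (e p) * cnj (ip y (e p)))" for x y
    using infsum_cmult_right'[of "- \<i>" "\<lambda>p. ip x (e p) * cnj (ip y (e p))" UNIV]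
    by (simp add: ip_sc_left algebra_simps)
qed

end

end

section \<open>Toral isometries and their orbits\<close>

locale toral = hilbert_space +
  fixes T1 T2 :: "'a \<Rightarrow> 'a"
  assumes toral: "toral_isometry sc ip T1 T2"
begin

lemma isometry1: "hisometry sc ip T1" and isometry2: "hisometry sc ip T2"
  and commute: "T1 (T2 x) = T2 (T1 x)"
  using toral unfolding toral_isometry_def by (auto simp: fun_eq_iff)

lemma T1_T2_funpow_commute: "(T1 ^^ a) ((T2 ^^ b) x) = (T2 ^^ b) ((T1 ^^ a) x)"
  using funpow_commute[of T1 T2] commute by blast

definition orbit :: "'a \<Rightarrow> nat \<times> nat \<Rightarrow> 'a" where
  "orbit g p = (T1 ^^ fst p) ((T2 ^^ snd p) g)"

lemma T1_orbit: "T1 (orbit g (m, n)) = orbit g (Suc m, n)"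
  and T2_orbit: "T2 (orbit g (m, n)) = orbit g (m, Suc n)"
  using T1_T2_funpow_commute[of m 1] by (simp_all add: orbit_def)

lemma orbit_zero: "orbit g (0, 0) = g"
  by (simp add: orbit_def)

lemma orbit_image: "{(T1 ^^ a) ((T2 ^^ b) g) | a b. True} = range (orbit g)"
proof (intro set_eqI iffI)
  fix y
  assume "y \<in> {(T1 ^^ a) ((T2 ^^ b) g) | a b. True}"
  then obtain a b where "y = orbit g (a, b)"
    by (auto simp: orbit_def)
  then show "y \<in> range (orbit g)"
    by simp
qed (auto simp: orbit_def)

lemma orbit_sc: "orbit (sc c g) p = sc c (orbit g p)"
  by (simp add: orbit_def isometry_sc[OF isometry_funpow[OF isometry1]]
      isometry_sc[OF isometry_funpow[OF isometry2]])

lemma ip_orbit_shift: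
  "ip (orbit w (k + a1, l + a2)) (orbit v (k + b1, l + b2)) = ip (orbit w (a1, a2)) (orbit v (b1, b2))"
proof -
  have "orbit u (k + c1, l + c2) = (T1 ^^ k) ((T2 ^^ l) (orbit u (c1, c2)))" for u c1 c2
    by (simp add: orbit_def funpow_add T1_T2_funpow_commute)
  then show ?thesis
    using isometry_ip[OF isometry_funpow[OF isometry1]] isometry_ip[OF isometry_funpow[OF isometry2]]
    by simp
qed

lemma orbit_dense_sc:
  assumes "hclosure ip (hspan sc (range (orbit (sc c g)))) = UNIV"
  shows "hclosure ip (hspan sc (range (orbit g))) = UNIV"
proof -
  have "range (orbit (sc c g)) \<subseteq> hspan sc (range (orbit g))"
    by (auto simp: orbit_sc intro: hspan_sc hspan_superset)
  then show ?thesis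
    using assms hclosure_mono[OF hspan_mono] by blast
qed

definition orbit_basis :: "'a \<Rightarrow> bool" where
  "orbit_basis g \<longleftrightarrow> orthonormal_basis (orbit g)"

lemma kerTstar_closed_hsubspace: "closed_hsubspace sc ip (kerTstar ip T1 T2)"
  unfolding closed_hsubspace_def
proof (intro conjI ballI allI subsetI)
  let ?K = "kerTstar ip T1 T2"
  show "0 \<in> ?K"
    by (simp add: kerTstar_def hadj_zero isometry1 isometry2)
  show "x + y \<in> ?K" if "x \<in> ?K" "y \<in> ?K" for x y
    using that by (simp add: kerTstar_def hadj_add isometry1 isometry2)
  show "sc c x \<in> ?K" if "x \<in> ?K" for x c
    using that by (simp add: kerTstar_def hadj_sc isometry1 isometry2)
  fix x
  assume "x \<in> hclosure ip ?K"
  then obtain X where X: "\<And>n. X n \<in> ?K" "hconverges X x"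
    using hclosure_imp_hconverges by blast
  have "hadj ip T x = 0" if T: "hisometry sc ip T" and zero: "\<And>n. hadj ip T (X n) = 0" for T
  proof -
    have "\<forall>n. hn (hadj ip T x) \<le> hn (x - X n)"
      using hn_hadj_le[OF T] zero by (metis diff_zero hadj_diff[OF T])
    moreover have "(\<lambda>n. hn (x - X n)) \<longlonglongrightarrow> 0"
      using hconverges_hn_diff[OF X(2), of x] by simp
    ultimately have "hn (hadj ip T x) \<le> 0"
      by (intro LIMSEQ_le_const) auto
    then show ?thesis
      by simp
  qed
  then show "x \<in> ?K"
    using X(1) isometry1 isometry2 unfolding kerTstar_def by blast
qed

lemma doubly_commuting_wandering:
  assumes "doubly_commuting ip T1 T2"
  shows "wandering sc ip T1 T2 (kerTstar ip T1 T2)"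
  unfolding wandering_def
proof (intro conjI kerTstar_closed_hsubspace allI impI ballI)
  have commute1: "hadj ip T1 (T2 x) = T2 (hadj ip T1 x)"
    and commute2: "hadj ip T2 (T1 x) = T1 (hadj ip T2 x)" for x
    using assms unfolding doubly_commuting_def by (metis comp_apply)+
  fix a1 a2 b1 b2 :: nat and w v
  assume w: "w \<in> kerTstar ip T1 T2"
    and "(a1 = 0 \<and> b1 \<noteq> 0) \<or> (a2 = 0 \<and> b2 \<noteq> 0)"
  then consider "a1 = 0" "b1 \<noteq> 0" | "a2 = 0" "b2 \<noteq> 0"
    by blast
  then show "ip ((T1 ^^ a1) ((T2 ^^ a2) w)) ((T1 ^^ b1) ((T2 ^^ b2) v)) = 0"
  proof cases
    case 1
    then show ?thesis
      using w ip_funpow_hadj_kernel[OF isometry1 isometry2 commute1, of w b1 a2 "(T2 ^^ b2) v"]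
      by (simp add: kerTstar_def)
  next
    case 2
    then show ?thesis
      using w ip_funpow_hadj_kernel[OF isometry2 isometry1 commute2, of w b2 a1 "(T1 ^^ b1) v"]
      by (simp add: kerTstar_def T1_T2_funpow_commute)
  qed
qed

lemma ip_kerTstar_orbit:
  assumes "w \<in> kerTstar ip T1 T2" and "p \<noteq> (0, 0)"
  shows "ip w (orbit g p) = 0"
proof -
  obtain m n where p: "p = (m, n)"
    by fastforce
  have "ip w (T1 y) = 0" "ip w (T2 y) = 0" for y
    using assms(1) ip_hadj_eq[OF isometry1, of w y] ip_hadj_eq[OF isometry2, of w y]
    by (simp_all add: kerTstar_def)
  then show ?thesis
    using assms(2) unfolding p
    by (cases m; cases n) (simp_all flip: T1_orbit T2_orbit)
qed

text \<open>For a wandering subspace, the inner product of two orbit points of one of its vectors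
  reduces, after cancelling the common powers of the isometries, to a pair of indices of which
  one vanishes in each coordinate.\<close>

lemma wandering_orbit_orthogonal:
  assumes W: "wandering sc ip T1 T2 W" and "w \<in> W" and "p \<noteq> q"
  shows "ip (orbit w p) (orbit w q) = 0"
proof -
  have wan: "ip (orbit w (a1, a2)) (orbit w (b1, b2)) = 0"
    if "(a1 = 0 \<and> b1 \<noteq> 0) \<or> (a2 = 0 \<and> b2 \<noteq> 0)" for a1 a2 b1 b2
    using W \<open>w \<in> W\<close> that unfolding wandering_def orbit_def by auto
  obtain a1 a2 b1 b2 where p: "p = (a1, a2)" and q: "q = (b1, b2)"
    by fastforce
  define k l where "k = min a1 b1" and "l = min a2 b2"
  have "ip (orbit w p) (orbit w q) = ip (orbit w (a1 - k, a2 - l)) (orbit w (b1 - k, b2 - l))"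
    using ip_orbit_shift[of w k "a1 - k" l "a2 - l" w "b1 - k" "b2 - l"] unfolding p q k_def l_def
    by simp
  also have "\<dots> = 0"
  proof (cases "(a1 - k = 0 \<and> b1 - k \<noteq> 0) \<or> (a2 - l = 0 \<and> b2 - l \<noteq> 0)")
    case True
    then show ?thesis by (rule wan)
  next
    case False
    then have "(b1 - k = 0 \<and> a1 - k \<noteq> 0) \<or> (b2 - l = 0 \<and> a2 - l \<noteq> 0)"
      using \<open>p \<noteq> q\<close> unfolding p q k_def l_def by auto
    then show ?thesis
      using wan ip_commute by (metis complex_cnj_zero)
  qed
  finally show ?thesis .
qed

lemma wandering_orbit_basis:
  assumes W: "wandering sc ip T1 T2 (kerTstar ip T1 T2)" and "f0 \<noteq> 0"
    and "f0 \<in> kerTstar ip T1 T2" and dense: "hclosure ip (hspan sc (range (orbit f0))) = UNIV"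
  shows "\<exists>g. orbit_basis g"
proof -
  define g where "g = sc (1 / of_real (hn f0)) f0"
  have f0_g: "f0 = sc (of_real (hn f0)) g"
    using hn_pos[OF \<open>f0 \<noteq> 0\<close>] by (simp add: g_def sc_sc)
  have "g \<in> kerTstar ip T1 T2"
    using W \<open>f0 \<in> kerTstar ip T1 T2\<close> unfolding wandering_def closed_hsubspace_def g_def by blast
  moreover have "ip (orbit g p) (orbit g p) = 1" for p
    using ip_orbit_shift[of g "fst p" 0 "snd p" 0 g 0 0] \<open>f0 \<noteq> 0\<close>
    by (simp add: orbit_zero ip_self g_def hn_sc norm_divide)
  ultimately have "orthonormal (orbit g)"
    unfolding orthonormal_def using wandering_orbit_orthogonal[OF W] by auto
  moreover have "hclosure ip (hspan sc (range (orbit g))) = UNIV"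
    using dense by (rule orbit_dense_sc[of "of_real (hn f0)" g, folded f0_g])
  ultimately show ?thesis
    unfolding orbit_basis_def orthonormal_basis_def by blast
qed

context
  fixes g :: 'a
  assumes basis: "orbit_basis g"
begin

lemma orbit_orthonormal: "orthonormal (orbit g)"
  and orbit_dense: "hclosure ip (hspan sc (range (orbit g))) = UNIV"
  using basis unfolding orbit_basis_def orthonormal_basis_def by blast+

lemma ip_orbit: "ip (orbit g p) (orbit g q) = (if p = q then 1 else 0)"
  by (rule orthonormal_ip[OF orbit_orthonormal])

lemma ip_isometry_orbit_outside:
  assumes T: "hisometry sc ip T" and shift: "\<And>p. T (orbit g p) = orbit g (\<sigma> p)"
    and "q \<notin> range \<sigma>"
  shows "ip (T x) (orbit g q) = 0"
proof (rule bounded_functional_dense_zero[OF orbit_dense, where \<phi> = "\<lambda>x. ip (T x) (orbit g q)"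
      and C = "hn (orbit g q)"])
  show "norm (ip (T a) (orbit g q)) \<le> hn (orbit g q) * hn a" for a
    using cauchy_schwarz[of "T a" "orbit g q"] isometry_hn[OF T] by (simp add: mult.commute)
  show "ip (T v) (orbit g q) = 0" if "v \<in> range (orbit g)" for v
    using that assms(3) by (auto simp: shift ip_orbit)
qed (simp_all add: isometry_add[OF T] isometry_sc[OF T] ip_add_left ip_sc_left)

lemma ip_T1_orbit: "ip (T1 x) (orbit g (m, n)) = (if m = 0 then 0 else ip x (orbit g (m - 1, n)))"
proof (cases m)
  case 0
  have "T1 (orbit g p) = orbit g ((\<lambda>(m, n). (Suc m, n)) p)" for p
    by (cases p) (simp add: T1_orbit)
  moreover have "(0, n) \<notin> range (\<lambda>(m, n). (Suc m, n))"
    by auto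
  ultimately show ?thesis
    using 0 ip_isometry_orbit_outside[OF isometry1] by simp
qed (simp add: T1_orbit[symmetric] isometry_ip[OF isometry1])

lemma ip_T2_orbit: "ip (T2 x) (orbit g (m, n)) = (if n = 0 then 0 else ip x (orbit g (m, n - 1)))"
proof (cases n)
  case 0
  have "T2 (orbit g p) = orbit g ((\<lambda>(m, n). (m, Suc n)) p)" for p
    by (cases p) (simp add: T2_orbit)
  moreover have "(m, 0) \<notin> range (\<lambda>(m, n). (m, Suc n))"
    by auto
  ultimately show ?thesis
    using 0 ip_isometry_orbit_outside[OF isometry2] by simp
qed (simp add: T2_orbit[symmetric] isometry_ip[OF isometry2])

lemma hadj_T1_orbit: "hadj ip T1 (orbit g (m, n)) = (if m = 0 then 0 else orbit g (m - 1, n))"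
  by (rule hadj_eqI[OF isometry1]) (simp add: ip_T1_orbit)

lemma hadj_T2_orbit: "hadj ip T2 (orbit g (m, n)) = (if n = 0 then 0 else orbit g (m, n - 1))"
  by (rule hadj_eqI[OF isometry2]) (simp add: ip_T2_orbit)

lemma orbit_basis_doubly_commuting: "doubly_commuting ip T1 T2"
proof -
  have "hadj ip T2 (T1 v) = T1 (hadj ip T2 v)" if "v \<in> range (orbit g)" for v
    using that by (auto simp: T1_orbit hadj_T2_orbit isometry_zero[OF isometry1])
  then have "hadj ip T2 (T1 x) = T1 (hadj ip T2 x)" for x
    by (rule isometry_hadj_commute_dense[OF isometry2 isometry1 orbit_dense])
  have "hadj ip T1 (T2 v) = T2 (hadj ip T1 v)" if "v \<in> range (orbit g)" for v
    using that by (auto simp: T2_orbit hadj_T1_orbit isometry_zero[OF isometry2])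
  then have "hadj ip T1 (T2 x) = T2 (hadj ip T1 x)" for x
    by (rule isometry_hadj_commute_dense[OF isometry1 isometry2 orbit_dense])
  with \<open>\<And>x. hadj ip T2 (T1 x) = T1 (hadj ip T2 x)\<close> show ?thesis
    unfolding doubly_commuting_def by auto
qed

end

end

section \<open>The Hardy space of the bidisc\<close>

lemma powser_zero_imp_coeff_zero:
  fixes c :: "nat \<Rightarrow> complex"
  assumes zero: "\<And>z. cmod z < 1 \<Longrightarrow> (\<lambda>n. c n * z ^ n) sums 0"
  shows "c k = 0"
proof (induction k rule: less_induct)
  case (less k)
  have shifted: "(\<lambda>n. c (n + k) * z ^ n) sums 0" if z: "z \<noteq> 0" "cmod z < 1" for z
  proof -
    have "(\<lambda>n. c (n + k) * z ^ (n + k)) sums 0"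
      using sums_split_initial_segment[OF zero[OF z(2)], of k] less by simp
    then have "(\<lambda>n. c (n + k) * z ^ (n + k) / z ^ k) sums 0"
      using sums_divide by fastforce
    then show ?thesis
      using z(1) by (simp add: power_add)
  qed
  have "((\<lambda>_. 0) \<longlongrightarrow> c (0 + k)) (at (0 :: complex))"
    by (rule powser_limit_0_strong[of 1 "\<lambda>n. c (n + k)" "\<lambda>_. 0"]) (use shifted in auto)
  then have "0 = c (0 + k)"
    by (rule LIM_const_eq)
  then show ?case
    by simp
qed

lemma geometric_product_summable:
  fixes r s :: real
  assumes "0 \<le> r" "r < 1" "0 \<le> s" "s < 1"
  shows "(\<lambda>p. r ^ fst p * s ^ snd p) summable_on UNIV"
proof -
  have "((\<lambda>n. r ^ m * s ^ n) has_sum (r ^ m / (1 - s))) UNIV" for m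
    using sums_mult[OF geometric_sums[of s], of "r ^ m"] assms
    by (intro sums_nonneg_imp_has_sum) simp_all
  moreover have "(\<lambda>m. r ^ m / (1 - s)) summable_on UNIV"
    using assms by (intro summable_nonneg_imp_summable_on summable_divide summable_geometric) simp_all
  ultimately have "(\<lambda>p. r ^ fst p * s ^ snd p) summable_on UNIV \<times> UNIV"
    using assms by (intro summable_on_SigmaI) auto
  then show ?thesis
    by simp
qed

lemma bidisc_series_summable:
  fixes a :: "nat \<times> nat \<Rightarrow> complex"
  assumes a: "(\<lambda>p. (cmod (a p))\<^sup>2) summable_on UNIV" and z: "z \<in> bidisc"
  shows "(\<lambda>(m, n). a (m, n) * fst z ^ m * snd z ^ n) summable_on UNIV"
proof -
  define y where "y p = fst z ^ fst p * snd z ^ snd p" for p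
  have "cmod (fst z) < 1" "cmod (snd z) < 1"
    using z by (auto simp: bidisc_def)
  then have "(\<lambda>p. ((cmod (fst z))\<^sup>2) ^ fst p * ((cmod (snd z))\<^sup>2) ^ snd p) summable_on UNIV"
    by (intro geometric_product_summable) (auto simp: abs_square_less_1)
  then have y: "(\<lambda>p. norm (y p * y p)) summable_on UNIV"
    by (simp add: y_def norm_mult norm_power power2_eq_square power_mult_distrib mult_ac)
  have "(\<lambda>p. norm (a p * a p)) summable_on UNIV"
    using a by (simp add: norm_mult power2_eq_square)
  from abs_summable_product[OF this y]
  have "(\<lambda>p. a p * y p) summable_on UNIV"
    by (rule Infinite_Sum.abs_summable_summable)
  then show ?thesis
    by (simp add: y_def split_def mult.assoc)
qed

lemma bidisc_row_summable:
  assumes "\<And>z. z \<in> bidisc \<Longrightarrow> (\<lambda>(m, n). c (m, n) * fst z ^ m * snd z ^ n) summable_on UNIV"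
    and "cmod w < 1"
  shows "(\<lambda>n. c (m, n) * w ^ n) summable_on UNIV"
proof -
  have "(1 / 2, w) \<in> bidisc"
    using assms(2) by (simp add: bidisc_def)
  then have "(\<lambda>(m, n). c (m, n) * (1 / 2) ^ m * w ^ n) summable_on UNIV \<times> UNIV"
    using assms(1) by fastforce
  then have "(\<lambda>n. c (m, n) * (1 / 2) ^ m * w ^ n) summable_on UNIV"
    by (rule summable_on_SigmaD1[where f = "\<lambda>m n. c (m, n) * (1 / 2) ^ m * w ^ n"]) simp
  then have "(\<lambda>n. (1 / 2) ^ m * (c (m, n) * w ^ n)) summable_on UNIV"
    by (simp add: mult_ac)
  then show ?thesis
    by (subst (asm) summable_on_cmult_right') simp_all
qed

text \<open>For fixed w, the row sums d m = (\<Sum>n. c (m, n) * w ^ n) are the coefficients of a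
  power series in u vanishing on the disc, hence zero; then each row vanishes as a power
  series in w.\<close>

lemma bidisc_series_zero_imp_coeff_zero:
  fixes c :: "nat \<times> nat \<Rightarrow> complex"
  assumes zero: "\<And>z. z \<in> bidisc \<Longrightarrow> ((\<lambda>(m, n). c (m, n) * fst z ^ m * snd z ^ n) has_sum 0) UNIV"
  shows "c p = 0"
proof -
  have row: "(\<lambda>n. c (m, n) * w ^ n) summable_on UNIV" if "cmod w < 1" for w m
    using zero that by (intro bidisc_row_summable) (auto simp: summable_on_def)
  have row_zero: "(\<lambda>n. c (m, n) * w ^ n) sums 0" if w: "cmod w < 1" for w m
  proof -
    define d where "d m = (\<Sum>\<^sub>\<infinity>n. c (m, n) * w ^ n)" for m
    have "d m = 0" for m
    proof (rule powser_zero_imp_coeff_zero)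
      fix u :: complex
      assume "cmod u < 1"
      then have sum: "((\<lambda>(m, n). c (m, n) * u ^ m * w ^ n) has_sum 0) (UNIV \<times> UNIV)"
        using zero[of "(u, w)"] w by (simp add: bidisc_def)
      have "((\<lambda>n. c (m, n) * u ^ m * w ^ n) has_sum (u ^ m * d m)) UNIV" for m
        using has_sum_cmult_right[OF has_sum_infsum[OF row[OF w]], of "u ^ m"]
        by (simp add: d_def mult_ac)
      then have "((\<lambda>m. u ^ m * d m) has_sum 0) UNIV"
        by (intro has_sum_SigmaD[OF sum]) simp
      then show "(\<lambda>m. d m * u ^ m) sums 0"
        by (simp add: has_sum_imp_sums mult.commute)
    qed
    then show ?thesis
      using has_sum_infsum[OF row[OF w, of m]] by (simp add: d_def has_sum_imp_sums)
  qed
  show ?thesis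
    using powser_zero_imp_coeff_zero[OF row_zero, of "fst p" "snd p"] by simp
qed

lemma h2_series_unique:
  assumes "h2_series a f" and "h2_series b f"
  shows "a = b"
proof -
  have "a p - b p = 0" for p
  proof (rule bidisc_series_zero_imp_coeff_zero)
    fix z
    assume "z \<in> bidisc"
    then have "((\<lambda>(m, n). a (m, n) * fst z ^ m * snd z ^ n) has_sum f z) UNIV"
      "((\<lambda>(m, n). b (m, n) * fst z ^ m * snd z ^ n) has_sum f z) UNIV"
      using assms unfolding h2_series_def by blast+
    from has_sum_add[OF this(1) has_sum_uminusI[OF this(2)]]
    show "((\<lambda>(m, n). (a (m, n) - b (m, n)) * fst z ^ m * snd z ^ n) has_sum 0) UNIV"
      by (simp add: split_def algebra_simps)
  qed
  then show ?thesis by auto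
qed

lemma h2_coeff_eq: "h2_series a f \<Longrightarrow> h2_coeff f = a"
  unfolding h2_coeff_def by (rule the_equality) (auto intro: h2_series_unique)

definition h2_fun :: "(nat \<times> nat \<Rightarrow> complex) \<Rightarrow> complex \<times> complex \<Rightarrow> complex" where
  "h2_fun a z = (if z \<in> bidisc then (\<Sum>\<^sub>\<infinity>(m, n). a (m, n) * fst z ^ m * snd z ^ n) else 0)"

lemma h2_series_h2_fun:
  assumes "(\<lambda>p. (cmod (a p))\<^sup>2) summable_on UNIV"
  shows "h2_series a (h2_fun a)"
  unfolding h2_series_def
  using assms bidisc_series_summable[OF assms] by (auto simp: h2_fun_def)

lemma h2_series_imp_eq_h2_fun: "h2_series a f \<Longrightarrow> f = h2_fun a"
  unfolding h2_series_def h2_fun_def by (auto simp: fun_eq_iff infsumI)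

lemma h2_fun_in_H2: "(\<lambda>p. (cmod (a p))\<^sup>2) summable_on UNIV \<Longrightarrow> h2_fun a \<in> H2"
  unfolding H2_def using h2_series_h2_fun by blast

lemma h2_coeff_h2_fun: "(\<lambda>p. (cmod (a p))\<^sup>2) summable_on UNIV \<Longrightarrow> h2_coeff (h2_fun a) = a"
  by (rule h2_coeff_eq[OF h2_series_h2_fun])

lemma H2_eq_h2_fun:
  assumes "f \<in> H2"
  shows "f = h2_fun (h2_coeff f)" and "(\<lambda>p. (cmod (h2_coeff f p))\<^sup>2) summable_on UNIV"
proof -
  obtain a where "h2_series a f"
    using assms unfolding H2_def by blast
  then show "f = h2_fun (h2_coeff f)" "(\<lambda>p. (cmod (h2_coeff f p))\<^sup>2) summable_on UNIV"
    using h2_coeff_eq h2_series_imp_eq_h2_fun unfolding h2_series_def by auto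
qed

lemma h2_inner_h2_fun:
  "(\<lambda>p. (cmod (a p))\<^sup>2) summable_on UNIV \<Longrightarrow> (\<lambda>p. (cmod (b p))\<^sup>2) summable_on UNIV \<Longrightarrow>
    h2_inner (h2_fun a) (h2_fun b) = (\<Sum>\<^sub>\<infinity>p. a p * cnj (b p))"
  unfolding h2_inner_def by (simp add: h2_coeff_h2_fun)

lemma h2_fun_add:
  assumes "(\<lambda>p. (cmod (a p))\<^sup>2) summable_on UNIV" and "(\<lambda>p. (cmod (b p))\<^sup>2) summable_on UNIV"
  shows "h2_fun (\<lambda>p. a p + b p) = (\<lambda>z. h2_fun a z + h2_fun b z)"
proof
  fix z
  show "h2_fun (\<lambda>p. a p + b p) z = h2_fun a z + h2_fun b z"
    using infsum_add[OF bidisc_series_summable[OF assms(1)] bidisc_series_summable[OF assms(2)]]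
    by (simp add: h2_fun_def split_def algebra_simps)
qed

lemma h2_fun_cmult: "h2_fun (\<lambda>p. c * a p) = (\<lambda>z. c * h2_fun a z)"
proof
  fix z
  show "h2_fun (\<lambda>p. c * a p) z = c * h2_fun a z"
    using infsum_cmult_right'[of c "\<lambda>(m, n). a (m, n) * fst z ^ m * snd z ^ n" UNIV]
    by (simp add: h2_fun_def split_def mult_ac)
qed

lemma infsum_reindex_outside_zero:
  assumes "inj h" and "\<And>p. p \<notin> range h \<Longrightarrow> f p = 0"
  shows "infsum f UNIV = infsum (f \<circ> h) UNIV"
proof -
  have "infsum f UNIV = infsum f (range h)"
    by (rule infsum_cong_neutral) (use assms(2) in auto)
  also have "\<dots> = infsum (f \<circ> h) UNIV"
    by (rule infsum_reindex) (use assms(1) in simp)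
  finally show ?thesis .
qed

definition coeff_shift1 :: "(nat \<times> nat \<Rightarrow> complex) \<Rightarrow> nat \<times> nat \<Rightarrow> complex" where
  "coeff_shift1 a p = (if fst p = 0 then 0 else a (fst p - 1, snd p))"

definition coeff_shift2 :: "(nat \<times> nat \<Rightarrow> complex) \<Rightarrow> nat \<times> nat \<Rightarrow> complex" where
  "coeff_shift2 a p = (if snd p = 0 then 0 else a (fst p, snd p - 1))"

lemma Mz1_h2_fun: "Mz1 (h2_fun a) = h2_fun (coeff_shift1 a)"
proof
  fix z
  have "(\<Sum>\<^sub>\<infinity>(m, n). coeff_shift1 a (m, n) * fst z ^ m * snd z ^ n)
      = (\<Sum>\<^sub>\<infinity>(m, n). fst z * (a (m, n) * fst z ^ m * snd z ^ n))"
    by (subst infsum_reindex_outside_zero[where h = "\<lambda>(m, n). (Suc m, n)"])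
       (auto simp: inj_def coeff_shift1_def image_iff split_def gr0_conv_Suc intro!: infsum_cong)
  also have "\<dots> = fst z * (\<Sum>\<^sub>\<infinity>(m, n). a (m, n) * fst z ^ m * snd z ^ n)"
    using infsum_cmult_right'[of "fst z" "\<lambda>(m, n). a (m, n) * fst z ^ m * snd z ^ n" UNIV]
    by (simp add: split_def)
  finally show "Mz1 (h2_fun a) z = h2_fun (coeff_shift1 a) z"
    by (simp add: Mz1_def h2_fun_def)
qed

lemma Mz2_h2_fun: "Mz2 (h2_fun a) = h2_fun (coeff_shift2 a)"
proof
  fix z
  have "(\<Sum>\<^sub>\<infinity>(m, n). coeff_shift2 a (m, n) * fst z ^ m * snd z ^ n)
      = (\<Sum>\<^sub>\<infinity>(m, n). snd z * (a (m, n) * fst z ^ m * snd z ^ n))"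
    by (subst infsum_reindex_outside_zero[where h = "\<lambda>(m, n). (m, Suc n)"])
       (auto simp: inj_def coeff_shift2_def image_iff split_def gr0_conv_Suc intro!: infsum_cong)
  also have "\<dots> = snd z * (\<Sum>\<^sub>\<infinity>(m, n). a (m, n) * fst z ^ m * snd z ^ n)"
    using infsum_cmult_right'[of "snd z" "\<lambda>(m, n). a (m, n) * fst z ^ m * snd z ^ n" UNIV]
    by (simp add: split_def)
  finally show "Mz2 (h2_fun a) z = h2_fun (coeff_shift2 a) z"
    by (simp add: Mz2_def h2_fun_def)
qed

definition coeff_unit :: "nat \<times> nat \<Rightarrow> nat \<times> nat \<Rightarrow> complex" where
  "coeff_unit q p = (if p = q then 1 else 0)"

lemma infsum_coeff_unit: "(\<Sum>\<^sub>\<infinity>p. v p * coeff_unit q p) = v q"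
proof -
  have "(\<Sum>\<^sub>\<infinity>p. v p * coeff_unit q p) = (\<Sum>\<^sub>\<infinity>p\<in>{q}. v p * coeff_unit q p)"
    by (rule infsum_cong_neutral) (auto simp: coeff_unit_def)
  then show ?thesis
    by (simp add: coeff_unit_def)
qed

lemma coeff_unit_square_summable: "(\<lambda>p. (cmod (coeff_unit q p))\<^sup>2) summable_on UNIV"
proof -
  have "(\<lambda>p. (cmod (coeff_unit q p))\<^sup>2) summable_on {q}"
    by simp
  then show ?thesis
    by (rule summable_on_cong_neutral[THEN iffD1, rotated -1]) (auto simp: coeff_unit_def)
qed

lemma coeff_shift_unit:
  "coeff_shift1 (coeff_unit (m, n)) = coeff_unit (Suc m, n)"
  "coeff_shift2 (coeff_unit (m, n)) = coeff_unit (m, Suc n)"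
  by (auto simp: fun_eq_iff coeff_shift1_def coeff_shift2_def coeff_unit_def)

lemma cnj_coeff_unit [simp]: "cnj (coeff_unit q p) = coeff_unit q p"
  by (simp add: coeff_unit_def)

lemma h2_inner_coeff_unit_right:
  assumes "(\<lambda>p. (cmod (a p))\<^sup>2) summable_on UNIV"
  shows "h2_inner (h2_fun a) (h2_fun (coeff_unit q)) = a q"
  by (simp add: h2_inner_h2_fun[OF assms coeff_unit_square_summable] infsum_coeff_unit)

lemma h2_inner_coeff_unit:
  "h2_inner (h2_fun (coeff_unit p)) (h2_fun (coeff_unit q)) = (if p = q then 1 else 0)"
  by (simp add: h2_inner_coeff_unit_right[OF coeff_unit_square_summable] coeff_unit_def)

section \<open>Orbit bases and the model on the Hardy space\<close>

context toral
begin

context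
  fixes g :: 'a
  assumes basis: "orbit_basis g"
begin

lemma orbit_coeffs_summable: "(\<lambda>p. (cmod (ip x (orbit g p)))\<^sup>2) summable_on UNIV"
  by (rule orthonormal_coeffs_summable[OF orbit_orthonormal[OF basis]])

lemma orbit_coeffs_h2_bij: "bij_betw (\<lambda>x. h2_fun (\<lambda>p. ip x (orbit g p))) UNIV H2"
  unfolding bij_betw_def
proof
  show "inj (\<lambda>x. h2_fun (\<lambda>p. ip x (orbit g p)))"
  proof (rule injI)
    fix x y
    assume "h2_fun (\<lambda>p. ip x (orbit g p)) = h2_fun (\<lambda>p. ip y (orbit g p))"
    then have coeffs_eq: "(\<lambda>p. ip x (orbit g p)) = (\<lambda>p. ip y (orbit g p))"
      by (metis h2_coeff_h2_fun orbit_coeffs_summable)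
    have "ip (x - y) (orbit g p) = 0" for p
      using fun_cong[OF coeffs_eq, of p] by (simp add: ip_diff_left)
    then have "(hn (x - y))\<^sup>2 = 0"
      using parseval_hn[OF basis[unfolded orbit_basis_def], of "x - y"] by simp
    then show "x = y"
      by simp
  qed
  show "range (\<lambda>x. h2_fun (\<lambda>p. ip x (orbit g p))) = H2"
  proof (intro equalityI subsetI)
    fix f
    assume "f \<in> H2"
    then obtain x where "\<forall>p. ip x (orbit g p) = h2_coeff f p"
      using orthonormal_synthesis[OF orbit_orthonormal[OF basis]] H2_eq_h2_fun(2) by blast
    then show "f \<in> range (\<lambda>x. h2_fun (\<lambda>p. ip x (orbit g p)))"
      using H2_eq_h2_fun(1)[OF \<open>f \<in> H2\<close>] by (metis (no_types, lifting) ext rangeI)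
  qed (auto intro: h2_fun_in_H2 orbit_coeffs_summable)
qed

lemma orbit_basis_unitarily_equiv_Mz: "unitarily_equiv_Mz sc ip T1 T2"
  unfolding unitarily_equiv_Mz_def
proof (intro exI conjI allI)
  let ?c = "\<lambda>x p. ip x (orbit g p)"
  show "bij_betw (\<lambda>x. h2_fun (?c x)) UNIV H2"
    by (rule orbit_coeffs_h2_bij)
  show "h2_fun (?c (x + y)) = (\<lambda>z. h2_fun (?c x) z + h2_fun (?c y) z)" for x y
    by (simp add: ip_add_left h2_fun_add[OF orbit_coeffs_summable orbit_coeffs_summable])
  show "h2_fun (?c (sc c x)) = (\<lambda>z. c * h2_fun (?c x) z)" for c x
    by (simp add: ip_sc_left h2_fun_cmult)
  show "h2_inner (h2_fun (?c x)) (h2_fun (?c y)) = ip x y" for x y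
    by (simp add: h2_inner_h2_fun[OF orbit_coeffs_summable orbit_coeffs_summable]
        parseval_ip[OF basis[unfolded orbit_basis_def], of x y])
  show "h2_fun (?c (T1 x)) = Mz1 (h2_fun (?c x))" for x
  proof -
    have "?c (T1 x) p = coeff_shift1 (?c x) p" for p
      by (cases p) (simp add: coeff_shift1_def ip_T1_orbit[OF basis])
    then show ?thesis
      by (simp add: Mz1_h2_fun fun_eq_iff)
  qed
  show "h2_fun (?c (T2 x)) = Mz2 (h2_fun (?c x))" for x
  proof -
    have "?c (T2 x) p = coeff_shift2 (?c x) p" for p
      by (cases p) (simp add: coeff_shift2_def ip_T2_orbit[OF basis])
    then show ?thesis
      by (simp add: Mz2_h2_fun fun_eq_iff)
  qed
qed

end

lemma Mz_intertwiner_orbit: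
  assumes "U g = h2_fun (coeff_unit (0, 0))"
    and "\<And>x. U (T1 x) = Mz1 (U x)" and "\<And>x. U (T2 x) = Mz2 (U x)"
  shows "U (orbit g p) = h2_fun (coeff_unit p)"
proof -
  have "U (orbit g (0, n)) = h2_fun (coeff_unit (0, n))" for n
    by (induction n) (simp_all add: assms orbit_zero Mz2_h2_fun coeff_shift_unit flip: T2_orbit)
  then have "U (orbit g (m, n)) = h2_fun (coeff_unit (m, n))" for m n
    by (induction m) (simp_all add: assms Mz1_h2_fun coeff_shift_unit flip: T1_orbit)
  then show ?thesis
    by (metis surj_pair)
qed

lemma unitarily_equiv_orbit_basis:
  assumes "unitarily_equiv_Mz sc ip T1 T2" and "f0 \<in> kerTstar ip T1 T2"
    and dense: "hclosure ip (hspan sc (range (orbit f0))) = UNIV"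
  shows "\<exists>g. orbit_basis g"
proof -
  obtain U where bij: "bij_betw U UNIV H2"
    and scale: "\<And>c x. U (sc c x) = (\<lambda>z. c * U x z)"
    and inner: "\<And>x y. h2_inner (U x) (U y) = ip x y"
    and T1: "\<And>x. U (T1 x) = Mz1 (U x)" and T2: "\<And>x. U (T2 x) = Mz2 (U x)"
    using assms(1) unfolding unitarily_equiv_Mz_def by blast
  obtain g where g: "U g = h2_fun (coeff_unit (0, 0))"
    using bij h2_fun_in_H2[OF coeff_unit_square_summable] by (metis bij_betw_def imageE)
  note U_orbit = Mz_intertwiner_orbit[of U g, OF g T1 T2]
  have "orthonormal (orbit g)"
    unfolding orthonormal_def using inner U_orbit h2_inner_coeff_unit by metis
  define a where "a = h2_coeff (U f0)"
  have "U f0 \<in> H2"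
    using bij by (auto simp: bij_betw_def)
  note f0 = H2_eq_h2_fun[OF this, folded a_def]
  have a_ip: "a p = ip f0 (orbit g p)" for p
    using h2_inner_coeff_unit_right[OF f0(2), of p] inner[of f0 "orbit g p"] f0(1) U_orbit
    by metis
  define c where "c = a (0, 0)"
  have "a = (\<lambda>p. c * coeff_unit (0, 0) p)"
    using ip_kerTstar_orbit[OF assms(2)] a_ip
    by (auto simp: fun_eq_iff coeff_unit_def c_def)
  then have "U f0 = U (sc c g)"
    using f0(1) by (simp add: scale g h2_fun_cmult)
  then have "f0 = sc c g"
    using bij by (simp add: bij_betw_def inj_eq)
  then have "hclosure ip (hspan sc (range (orbit g))) = UNIV"
    using dense orbit_dense_sc by blast
  with \<open>orthonormal (orbit g)\<close> show ?thesis
    unfolding orbit_basis_def orthonormal_basis_def by blast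
qed

end

theorem corollary6p6:
  fixes sc :: "complex \<Rightarrow> 'a::ab_group_add \<Rightarrow> 'a"
    and ip :: "'a \<Rightarrow> 'a \<Rightarrow> complex"
    and T1 T2 :: "'a \<Rightarrow> 'a" and f0 :: 'a
  assumes "complex_hilbert sc ip"
    and "toral_isometry sc ip T1 T2"
    and "analytic_pair T1 T2"
    and "cyclic_vector sc ip T1 T2 f0"
    and "f0 \<noteq> 0"
    and "f0 \<in> kerTstar ip T1 T2"
  shows "(wandering sc ip T1 T2 (kerTstar ip T1 T2) \<longleftrightarrow> unitarily_equiv_Mz sc ip T1 T2)
       \<and> (unitarily_equiv_Mz sc ip T1 T2 \<longleftrightarrow> doubly_commuting ip T1 T2)"
proof -
  interpret toral sc ip T1 T2
    using assms(1,2) by (simp add: toral_def toral_axioms_def hilbert_space_def)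
  have dense: "hclosure ip (hspan sc (range (orbit f0))) = UNIV"
    using assms(4) unfolding cyclic_vector_def orbit_image .
  have "wandering sc ip T1 T2 (kerTstar ip T1 T2) \<Longrightarrow> \<exists>g. orbit_basis g"
    using wandering_orbit_basis assms(5,6) dense by blast
  moreover have "unitarily_equiv_Mz sc ip T1 T2 \<Longrightarrow> \<exists>g. orbit_basis g"
    using unitarily_equiv_orbit_basis assms(6) dense by blast
  moreover have "orbit_basis g \<Longrightarrow> unitarily_equiv_Mz sc ip T1 T2 \<and> doubly_commuting ip T1 T2" for g
    using orbit_basis_unitarily_equiv_Mz orbit_basis_doubly_commuting by blast
  moreover have "doubly_commuting ip T1 T2 \<Longrightarrow> wandering sc ip T1 T2 (kerTstar ip T1 T2)"
    by (rule doubly_commuting_wandering)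
  ultimately show ?thesis
    by blast
qed

end
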